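(* Let $\Gamma$ be a finite connected tetravalent $G$-half-arc-transitive graph with $G\leq\mathrm{Aut}(\Gamma)$, and let $N$ be a solvable normal subgroup of $G$. If $G$ is non-solvable, then $\Gamma$ is a normal cover of $\Gamma_N$ and $N$ is semiregular on $V(\Gamma)$.
   Context: $\Gamma$ is $G$-half-arc-transitive if $G$ is transitive on vertices and edges but not on arcs. For $N\trianglelefteq G$, the normal quotient $\Gamma_N$ has as vertices the $N$-orbits on $V(\Gamma)$, two distinct orbits adjacent iff some edge of $\Gamma$ joins them. $\Gamma$ is a normal cover of $\Gamma_N$ if $\Gamma_N$ has the same valency as $\Gamma$. A permutation group is semiregular if all point stabilizers are trivial. *)

theory Defs
  imports "HOL-Algebra.Solvable_Groups" "HOL-Algebra.Bij"
begin

definition simple_graph :: "'a set \<Rightarrow> ('a \<Rightarrow> 'a \<Rightarrow> bool) \<Rightarrow> bool" where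
  "simple_graph V E \<longleftrightarrow> finite V \<and> (\<forall>u v. E u v \<longrightarrow> u \<in> V \<and> v \<in> V \<and> E v u \<and> u \<noteq> v)"

definition graph_connected :: "'a set \<Rightarrow> ('a \<Rightarrow> 'a \<Rightarrow> bool) \<Rightarrow> bool" where
  "graph_connected V E \<longleftrightarrow> V \<noteq> {} \<and> (\<forall>u\<in>V. \<forall>v\<in>V. E\<^sup>*\<^sup>* u v)"

definition tetravalent :: "'a set \<Rightarrow> ('a \<Rightarrow> 'a \<Rightarrow> bool) \<Rightarrow> bool" where
  "tetravalent V E \<longleftrightarrow> (\<forall>v\<in>V. card {w \<in> V. E v w} = 4)"

definition graph_edges :: "('a \<Rightarrow> 'a \<Rightarrow> bool) \<Rightarrow> 'a set set" where
  "graph_edges E = {{u, v} | u v. E u v}"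

definition graph_arcs :: "('a \<Rightarrow> 'a \<Rightarrow> bool) \<Rightarrow> ('a \<times> 'a) set" where
  "graph_arcs E = {(u, v). E u v}"

definition graph_aut :: "'a set \<Rightarrow> ('a \<Rightarrow> 'a \<Rightarrow> bool) \<Rightarrow> ('a \<Rightarrow> 'a) set" where
  "graph_aut V E = {g \<in> Bij V. \<forall>u\<in>V. \<forall>v\<in>V. E (g u) (g v) \<longleftrightarrow> E u v}"

abbreviation perm_grp :: "'a set \<Rightarrow> ('a \<Rightarrow> 'a) set \<Rightarrow> ('a \<Rightarrow> 'a) monoid" where
  "perm_grp V H \<equiv> (BijGroup V)\<lparr>carrier := H\<rparr>"

definition half_arc_transitive ::
  "'a set \<Rightarrow> ('a \<Rightarrow> 'a \<Rightarrow> bool) \<Rightarrow> ('a \<Rightarrow> 'a) set \<Rightarrow> bool" where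
  "half_arc_transitive V E G \<longleftrightarrow>
     (\<forall>u\<in>V. \<forall>v\<in>V. \<exists>g\<in>G. g u = v) \<and>
     (\<forall>e\<in>graph_edges E. \<forall>f\<in>graph_edges E. \<exists>g\<in>G. g ` e = f) \<and>
     \<not> (\<forall>a\<in>graph_arcs E. \<forall>b\<in>graph_arcs E. \<exists>g\<in>G. (g (fst a), g (snd a)) = b)"

definition orbit_of :: "('a \<Rightarrow> 'a) set \<Rightarrow> 'a \<Rightarrow> 'a set" where
  "orbit_of N v = {n v | n. n \<in> N}"

definition quotient_vertices :: "'a set \<Rightarrow> ('a \<Rightarrow> 'a) set \<Rightarrow> 'a set set" where
  "quotient_vertices V N = orbit_of N ` V"

definition quotient_adj :: "('a \<Rightarrow> 'a \<Rightarrow> bool) \<Rightarrow> 'a set \<Rightarrow> 'a set \<Rightarrow> bool" where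
  "quotient_adj E B C \<longleftrightarrow> B \<noteq> C \<and> (\<exists>u\<in>B. \<exists>w\<in>C. E u w)"

text \<open>Gamma is a normal cover of Gamma_N: Gamma_N has the same valency (4) as Gamma.\<close>
definition normal_cover_tetra :: "'a set \<Rightarrow> ('a \<Rightarrow> 'a \<Rightarrow> bool) \<Rightarrow> ('a \<Rightarrow> 'a) set \<Rightarrow> bool" where
  "normal_cover_tetra V E N \<longleftrightarrow>
     (\<forall>B\<in>quotient_vertices V N. card {C \<in> quotient_vertices V N. quotient_adj E B C} = 4)"

definition semiregular :: "'a set \<Rightarrow> ('a \<Rightarrow> 'a) set \<Rightarrow> bool" where
  "semiregular V N \<longleftrightarrow> (\<forall>v\<in>V. \<forall>n\<in>N. n v = v \<longrightarrow> n = (\<lambda>x\<in>V. x))"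

end

theory Submission
  imports Defs
begin

(* Orient every edge along the G-orbit of one arc: since G is edge- but not arc-transitive,
   each vertex gets two out- and two in-neighbours. An element fixing a vertex permutes these
   two 2-sets, and permutations of a 2-set commute; so commutators of elements fixing a set of
   vertices fix its neighbourhood, and by connectivity the vertex stabiliser G_v is solvable.

   Suppose the N-orbits meet some closed neighbourhood in two vertices. The transitivity of G
   on vertices and edges then forces the normal quotient to have valency at most 2, so it is a
   path or a cycle. G acts on its darts commuting with the rotation that walks along it, and
   permutes the at most two orbits of this rotation; hence G'' stabilises the N-orbit of v,
   which is N G_v. As N and G_v are solvable, G would be solvable. Thus the N-orbits meet
   every closed neighbourhood in distinct vertices: the quotient has valency 4, and an element
   of N fixing a vertex fixes its neighbours, hence by connectivity everything. *)

lemma card_le_2_eq_or_eq: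
  assumes "finite Y" "card Y \<le> 2" "a \<in> Y" "b \<in> Y" "c \<in> Y" "a \<noteq> b"
  shows "c = a \<or> c = b"
proof (rule ccontr)
  assume "\<not> (c = a \<or> c = b)"
  then have "card {a, b, c} = 3" using assms by auto
  moreover have "card {a, b, c} \<le> card Y" using assms by (intro card_mono) auto
  ultimately show False using assms by auto
qed

lemma injective_selfmaps_of_card_le_2_commute:
  assumes fin: "finite Y" and card: "card Y \<le> 2"
    and f: "f ` Y \<subseteq> Y" "inj_on f Y" and k: "k ` Y \<subseteq> Y" "inj_on k Y" and y: "y \<in> Y"
  shows "f (k y) = k (f y)"
proof -
  have in_Y: "f y \<in> Y" "k y \<in> Y" "f (k y) \<in> Y" "k (f y) \<in> Y" "f (f y) \<in> Y" "k (k y) \<in> Y"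
    using f k y by (auto simp: image_subset_iff)
  note other = card_le_2_eq_or_eq[OF fin card]
  consider "f y = y" | "k y = y" | "f y \<noteq> y" "k y \<noteq> y" by blast
  then show ?thesis
  proof cases
    case 1
    then have "k y = y \<or> f (k y) = k y"
      using other[of y "k y" "f (k y)"] f(2) y in_Y by (metis inj_on_def)
    then show ?thesis using 1 by auto
  next
    case 2
    then have "f y = y \<or> k (f y) = f y"
      using other[of y "f y" "k (f y)"] k(2) y in_Y by (metis inj_on_def)
    then show ?thesis using 2 by auto
  next
    case 3
    have "k y = f y" using other[of y "f y" "k y"] 3 y in_Y by auto
    moreover have "f (f y) = y"
      using other[of y "f y" "f (f y)"] 3 f(2) y in_Y by (metis inj_on_def)
    moreover have "k (k y) = y"
      using other[of y "k y" "k (k y)"] 3 k(2) y in_Y by (metis inj_on_def)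
    ultimately show ?thesis by simp
  qed
qed

context group
begin

lemma derived_subset_if_commutators_in:
  assumes "subgroup H G" "K \<subseteq> carrier G"
    and "\<And>a b. a \<in> K \<Longrightarrow> b \<in> K \<Longrightarrow> a \<otimes> b \<otimes> inv a \<otimes> inv b \<in> H"
  shows "derived G K \<subseteq> H"
  unfolding derived_def using assms by (intro generate_subgroup_incl) auto

lemma pointwise_stabiliser_subgroup:
  assumes mult: "\<And>a b y. a \<in> carrier G \<Longrightarrow> b \<in> carrier G \<Longrightarrow> y \<in> Y \<Longrightarrow> act (a \<otimes> b) y = act a (act b y)"
    and one: "\<And>y. y \<in> Y \<Longrightarrow> act \<one> y = y"
  shows "subgroup {g \<in> carrier G. \<forall>y\<in>Y. act g y = y} G"
proof (rule subgroupI)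
  fix a assume a: "a \<in> {g \<in> carrier G. \<forall>y\<in>Y. act g y = y}"
  have "act (inv a) y = y" if "y \<in> Y" for y
  proof -
    have "act (inv a) y = act (inv a) (act a y)" using a that by auto
    also have "\<dots> = act (inv a \<otimes> a) y" using mult[of "inv a" a y] a that by auto
    also have "\<dots> = y" using a that one by auto
    finally show ?thesis .
  qed
  then show "inv a \<in> {g \<in> carrier G. \<forall>y\<in>Y. act g y = y}" using a by auto
qed (use mult one in auto)

lemma commutator_fixes_if_commute:
  assumes g: "g \<in> carrier G" and h: "h \<in> carrier G"
    and mult: "\<And>a b y. a \<in> carrier G \<Longrightarrow> b \<in> carrier G \<Longrightarrow> y \<in> Y \<Longrightarrow> act (a \<otimes> b) y = act a (act b y)"
    and one: "\<And>y. y \<in> Y \<Longrightarrow> act \<one> y = y"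
    and inv_g: "\<And>y. y \<in> Y \<Longrightarrow> act (inv g) y \<in> Y"
    and inv_h: "\<And>y. y \<in> Y \<Longrightarrow> act (inv h) y \<in> Y"
    and comm: "\<And>y. y \<in> Y \<Longrightarrow> act g (act h y) = act h (act g y)"
    and y: "y \<in> Y"
  shows "act (g \<otimes> h \<otimes> inv g \<otimes> inv h) y = y"
proof -
  define w where "w = act (inv h) y"
  define z where "z = act (inv g) w"
  have w: "w \<in> Y" and z: "z \<in> Y" using inv_h inv_g y by (auto simp: w_def z_def)
  have "act (g \<otimes> h \<otimes> inv g \<otimes> inv h) y = act g (act h z)"
    using mult g h y w unfolding w_def z_def by (simp add: m_assoc)
  also have "\<dots> = act h (act g z)" using comm z by auto
  also have "act g z = w" using mult[of g "inv g" w] g w one by (simp add: z_def)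
  also have "act h w = y" using mult[of h "inv h" y] h y one by (simp add: w_def)
  finally show ?thesis .
qed

lemma derived_fixes_if_commute:
  assumes K: "K \<subseteq> carrier G"
    and mult: "\<And>a b y. a \<in> carrier G \<Longrightarrow> b \<in> carrier G \<Longrightarrow> y \<in> Y \<Longrightarrow> act (a \<otimes> b) y = act a (act b y)"
    and one: "\<And>y. y \<in> Y \<Longrightarrow> act \<one> y = y"
    and inv_closed: "\<And>k y. k \<in> K \<Longrightarrow> y \<in> Y \<Longrightarrow> act (inv k) y \<in> Y"
    and comm: "\<And>a b y. a \<in> K \<Longrightarrow> b \<in> K \<Longrightarrow> y \<in> Y \<Longrightarrow> act a (act b y) = act b (act a y)"
  shows "derived G K \<subseteq> {g \<in> carrier G. \<forall>y\<in>Y. act g y = y}"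
proof (rule derived_subset_if_commutators_in[OF pointwise_stabiliser_subgroup K])
  fix a b assume ab: "a \<in> K" "b \<in> K"
  then have "act (a \<otimes> b \<otimes> inv a \<otimes> inv b) y = y" if "y \<in> Y" for y
    by (intro commutator_fixes_if_commute[of a b Y act])
      (use K mult one inv_closed comm that in auto)
  then show "a \<otimes> b \<otimes> inv a \<otimes> inv b \<in> {g \<in> carrier G. \<forall>y\<in>Y. act g y = y}"
    using ab K by blast
qed (use mult one in auto)

end

section \<open>Graphs of valency at most two\<close>

locale valency_le_2_graph =
  fixes X :: "'b set" and adj :: "'b \<Rightarrow> 'b \<Rightarrow> bool"
  assumes finite_X: "finite X"
    and adj_in_X: "adj P Q \<Longrightarrow> P \<in> X \<and> Q \<in> X"
    and adj_sym: "adj P Q \<Longrightarrow> adj Q P"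
    and valency_le_2: "P \<in> X \<Longrightarrow> card {Q. adj P Q} \<le> 2"
    and connected: "P \<in> X \<Longrightarrow> Q \<in> X \<Longrightarrow> adj\<^sup>*\<^sup>* P Q"
begin

text \<open>Such a graph is a path or a cycle. The map \<open>rotate\<close> moves a dart one step forward along it,
  turning back at an end vertex of a path; so a dart orbit runs through all darts of one
  orientation, or through all darts of a path.\<close>

definition darts :: "('b \<times> 'b) set" where
  "darts = {(P, Q). adj P Q}"

definition next_vertex :: "'b \<Rightarrow> 'b \<Rightarrow> 'b" where
  "next_vertex P Q = (if \<exists>R. adj Q R \<and> R \<noteq> P then (SOME R. adj Q R \<and> R \<noteq> P) else P)"

definition rotate :: "'b \<times> 'b \<Rightarrow> 'b \<times> 'b" where
  "rotate t = (snd t, next_vertex (fst t) (snd t))"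

definition dart_orbit :: "'b \<times> 'b \<Rightarrow> ('b \<times> 'b) set" where
  "dart_orbit t = range (\<lambda>i. (rotate ^^ i) t)"

lemma finite_darts: "finite darts"
proof -
  have "darts \<subseteq> X \<times> X" using adj_in_X by (auto simp: darts_def)
  then show ?thesis using finite_X by (meson finite_SigmaI finite_subset)
qed

lemma other_neighbour_unique:
  assumes "adj Q P" "adj Q R1" "adj Q R2" "R1 \<noteq> P" "R2 \<noteq> P"
  shows "R1 = R2"
proof -
  have "finite {R. adj Q R}" "card {R. adj Q R} \<le> 2"
    using finite_X adj_in_X valency_le_2 assms(1) by (auto intro: rev_finite_subset)
  then show ?thesis using card_le_2_eq_or_eq[of "{R. adj Q R}" P R1 R2] assms by auto
qed

lemma next_vertex_eq:
  assumes "adj P Q" "adj Q R" "R \<noteq> P"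
  shows "next_vertex P Q = R"
proof -
  have ex: "\<exists>R. adj Q R \<and> R \<noteq> P" using assms by blast
  then have "adj Q (SOME R. adj Q R \<and> R \<noteq> P) \<and> (SOME R. adj Q R \<and> R \<noteq> P) \<noteq> P"
    by (rule someI_ex)
  then have "(SOME R. adj Q R \<and> R \<noteq> P) = R"
    using other_neighbour_unique[OF adj_sym[OF assms(1)]] assms(2,3) by blast
  then show ?thesis unfolding next_vertex_def using ex by simp
qed

lemma next_vertex_no_other: "\<not> (\<exists>R. adj Q R \<and> R \<noteq> P) \<Longrightarrow> next_vertex P Q = P"
  unfolding next_vertex_def by (rule if_not_P)

lemma adj_next_vertex:
  assumes "adj P Q"
  shows "adj Q (next_vertex P Q)"
proof (cases "\<exists>R. adj Q R \<and> R \<noteq> P")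
  case True
  then show ?thesis using next_vertex_eq assms by auto
next
  case False
  then have "next_vertex P Q = P" by (rule next_vertex_no_other)
  then show ?thesis using adj_sym[OF assms] by simp
qed

lemma rotate_in_darts: "t \<in> darts \<Longrightarrow> rotate t \<in> darts"
  by (cases t) (auto simp: darts_def rotate_def adj_next_vertex)

lemma funpow_rotate_in_darts: "t \<in> darts \<Longrightarrow> (rotate ^^ i) t \<in> darts"
  by (induct i) (auto simp: rotate_in_darts)

lemma inj_on_rotate: "inj_on rotate darts"
proof (rule inj_onI)
  fix s t assume "s \<in> darts" "t \<in> darts" and eq: "rotate s = rotate t"
  obtain P Q P' Q' where st: "s = (P, Q)" "t = (P', Q')" by (cases s, cases t)
  have adj: "adj P Q" "adj P' Q" and next_eq: "next_vertex P Q = next_vertex P' Q"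
    using \<open>s \<in> darts\<close> \<open>t \<in> darts\<close> eq st by (auto simp: darts_def rotate_def)
  have "P = P'"
  proof (rule ccontr)
    assume "P \<noteq> P'"
    moreover have "adj Q P" "adj Q P'" using adj adj_sym by blast+
    ultimately have "next_vertex P Q = P'" "next_vertex P' Q = P"
      using next_vertex_eq adj by auto
    then show False using next_eq \<open>P \<noteq> P'\<close> by simp
  qed
  then show "s = t" using st eq by (simp add: rotate_def)
qed

lemma rotate_periodic:
  assumes s: "s \<in> darts"
  obtains m where "m > 0" "(rotate ^^ m) s = s"
proof -
  have "\<not> inj_on (\<lambda>i. (rotate ^^ i) s) {0..card darts}"
  proof
    assume inj: "inj_on (\<lambda>i. (rotate ^^ i) s) {0..card darts}"
    have "(\<lambda>i. (rotate ^^ i) s) ` {0..card darts} \<subseteq> darts"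
      using funpow_rotate_in_darts s by blast
    then have "card ((\<lambda>i. (rotate ^^ i) s) ` {0..card darts}) \<le> card darts"
      using finite_darts card_mono by blast
    then show False using card_image[OF inj] by simp
  qed
  then have "\<exists>i j. i < j \<and> (rotate ^^ i) s = (rotate ^^ j) s"
    unfolding inj_on_def by (metis linorder_neqE_nat)
  then obtain i j where "i < j" and ij: "(rotate ^^ i) s = (rotate ^^ j) s" by blast
  have "rotate ` darts = darts"
    by (rule endo_inj_surj[OF finite_darts _ inj_on_rotate]) (use rotate_in_darts in blast)
  then have "bij_betw rotate darts darts" unfolding bij_betw_def using inj_on_rotate by blast
  then have inj: "inj_on (rotate ^^ i) darts" by (rule bij_betw_imp_inj_on[OF bij_betw_funpow])
  have "i + (j - i) = j" using \<open>i < j\<close> by simp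
  then have "(rotate ^^ i) ((rotate ^^ (j - i)) s) = (rotate ^^ i) s"
    using ij funpow_add[of i "j - i" rotate] by simp
  then have "(rotate ^^ (j - i)) s = s"
    by (rule inj_onD[OF inj]) (use s funpow_rotate_in_darts in auto)
  then show thesis using that[of "j - i"] \<open>i < j\<close> by simp
qed

lemma dart_orbit_self: "t \<in> dart_orbit t"
  unfolding dart_orbit_def by (auto intro: range_eqI[of _ _ 0])

lemma funpow_in_dart_orbit: "(rotate ^^ k) t \<in> dart_orbit t"
  unfolding dart_orbit_def by blast

lemma rotate_in_dart_orbit:
  assumes "x \<in> dart_orbit t"
  shows "rotate x \<in> dart_orbit t"
proof -
  obtain i where "x = (rotate ^^ i) t" using assms unfolding dart_orbit_def by auto
  then have "rotate x = (rotate ^^ Suc i) t" by simp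
  then show ?thesis by (metis funpow_in_dart_orbit)
qed

lemma dart_orbit_subset: "t \<in> darts \<Longrightarrow> dart_orbit t \<subseteq> darts"
  unfolding dart_orbit_def using funpow_rotate_in_darts by blast

lemma dart_orbit_mono:
  assumes "x \<in> dart_orbit t"
  shows "dart_orbit x \<subseteq> dart_orbit t"
proof
  fix y assume "y \<in> dart_orbit x"
  then obtain j where j: "y = (rotate ^^ j) x" unfolding dart_orbit_def by auto
  obtain i where i: "x = (rotate ^^ i) t" using assms unfolding dart_orbit_def by auto
  have "y = (rotate ^^ (j + i)) t" using i j by (simp add: funpow_add)
  then show "y \<in> dart_orbit t" using funpow_in_dart_orbit by simp
qed

lemma dart_orbit_eq:
  assumes t: "t \<in> darts" and x: "x \<in> dart_orbit t"
  shows "dart_orbit x = dart_orbit t"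
proof
  show "dart_orbit x \<subseteq> dart_orbit t" using dart_orbit_mono x .
  obtain k where k: "x = (rotate ^^ k) t" using x unfolding dart_orbit_def by auto
  obtain m where "m > 0" and m: "(rotate ^^ m) t = t" using rotate_periodic t by blast
  have "((rotate ^^ m) ^^ k) t = t" using m by (induct k) auto
  then have "(rotate ^^ (m * k - k + k)) t = t"
    using \<open>m > 0\<close> by (simp add: funpow_mult)
  then have "(rotate ^^ (m * k - k)) x = t" using k by (simp add: funpow_add)
  then have "t \<in> dart_orbit x" using funpow_in_dart_orbit by metis
  then show "dart_orbit t \<subseteq> dart_orbit x" using dart_orbit_mono by blast
qed

lemma in_dart_orbit_if_rotate_in:
  assumes s: "s \<in> darts" and r: "rotate s \<in> dart_orbit t"
  shows "s \<in> dart_orbit t"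
proof -
  obtain m where "m > 0" and m: "(rotate ^^ m) s = s" using rotate_periodic s by blast
  then have "(rotate ^^ (m - 1)) (rotate s) = s" by (metis Suc_diff_1 funpow_Suc_right comp_apply)
  then have "s \<in> dart_orbit (rotate s)" using funpow_in_dart_orbit by metis
  then show ?thesis using dart_orbit_mono r by blast
qed

lemma adj_commute: "adj P Q \<longleftrightarrow> adj Q P"
  using adj_sym by blast

lemma swap_in_darts: "t \<in> darts \<Longrightarrow> prod.swap t \<in> darts"
  by (cases t) (simp add: darts_def adj_commute)

lemma rotate_swap_rotate:
  assumes "t \<in> darts"
  shows "rotate (prod.swap (rotate t)) = prod.swap t"
proof -
  obtain P Q where t: "t = (P, Q)" and adj: "adj P Q" using assms by (auto simp: darts_def)
  have "next_vertex (next_vertex P Q) Q = P"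
  proof (cases "next_vertex P Q = P")
    case False
    have "adj (next_vertex P Q) Q" using adj_next_vertex[OF adj] by (rule adj_sym)
    moreover have "adj Q P" using adj by (rule adj_sym)
    ultimately show ?thesis using next_vertex_eq False by metis
  qed simp
  then show ?thesis using t by (simp add: rotate_def)
qed

lemma swap_in_dart_orbit:
  assumes t: "t \<in> darts" and s: "s \<in> dart_orbit t"
  shows "prod.swap s \<in> dart_orbit (prod.swap t)"
proof -
  have "prod.swap ((rotate ^^ i) t) \<in> dart_orbit (prod.swap t)" for i
  proof (induct i)
    case (Suc i)
    have x: "(rotate ^^ i) t \<in> darts" using funpow_rotate_in_darts t by blast
    have "rotate (prod.swap (rotate ((rotate ^^ i) t))) \<in> dart_orbit (prod.swap t)"
      using rotate_swap_rotate[OF x] Suc by simp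
    then show ?case
      using in_dart_orbit_if_rotate_in swap_in_darts rotate_in_darts x by simp
  qed (simp add: dart_orbit_self)
  then show ?thesis using s unfolding dart_orbit_def by auto
qed

text \<open>Starting from one dart, walking forward and turning round reaches all darts, by
  connectivity.\<close>

lemma darts_subset_two_orbits:
  assumes t0: "t0 \<in> darts"
  shows "darts \<subseteq> dart_orbit t0 \<union> dart_orbit (prod.swap t0)"
proof -
  define W where "W = dart_orbit t0 \<union> dart_orbit (prod.swap t0)"
  have swap_W: "prod.swap s \<in> W" if "s \<in> W" for s
    using that swap_in_dart_orbit[OF t0, of s] swap_in_dart_orbit[OF swap_in_darts[OF t0], of s]
    unfolding W_def by auto
  have rotate_W: "rotate s \<in> W" if "s \<in> W" for s
    using that rotate_in_dart_orbit unfolding W_def by blast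
  define out_W where "out_W P \<longleftrightarrow> (\<forall>Q. adj P Q \<longrightarrow> (P, Q) \<in> W)" for P
  have out_W_start: "out_W P" if "(P, Q) \<in> W" "adj P Q" for P Q
    unfolding out_W_def
  proof (intro allI impI)
    fix R assume "adj P R"
    show "(P, R) \<in> W"
    proof (cases "R = Q")
      case False
      have "next_vertex Q P = R"
        using next_vertex_eq[of Q P R] that(2) \<open>adj P R\<close> False adj_commute by blast
      then have "rotate (Q, P) = (P, R)" by (simp add: rotate_def)
      then show ?thesis using rotate_W swap_W[OF that(1)] by (metis swap_simp)
    qed (use that in simp)
  qed
  have out_W_step: "out_W Q" if "out_W P" "adj P Q" for P Q
  proof -
    have "(Q, next_vertex P Q) \<in> W"
      using that rotate_W[of "(P, Q)"] unfolding out_W_def by (simp add: rotate_def)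
    then show ?thesis using out_W_start adj_next_vertex[OF that(2)] by blast
  qed
  obtain P0 Q0 where t0_eq: "t0 = (P0, Q0)" and "adj P0 Q0" using t0 by (auto simp: darts_def)
  then have "out_W P0" using out_W_start dart_orbit_self unfolding W_def by blast
  moreover have "P0 \<in> X" using \<open>adj P0 Q0\<close> adj_in_X by blast
  ultimately have "out_W P" if "P \<in> X" for P
  proof -
    have "adj\<^sup>*\<^sup>* P0 P" using connected \<open>P0 \<in> X\<close> that by blast
    then show ?thesis by (induct rule: rtranclp_induct) (use \<open>out_W P0\<close> out_W_step in blast)+
  qed
  then show ?thesis unfolding W_def[symmetric] using adj_in_X out_W_def by (auto simp: darts_def)
qed

lemma card_dart_orbits_le_2: "card (dart_orbit ` darts) \<le> 2"
proof (cases "darts = {}")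
  case False
  then obtain t0 where t0: "t0 \<in> darts" by auto
  have "dart_orbit ` darts \<subseteq> {dart_orbit t0, dart_orbit (prod.swap t0)}"
    using darts_subset_two_orbits[OF t0] dart_orbit_eq t0 swap_in_darts[OF t0] by blast
  then have "card (dart_orbit ` darts) \<le> card {dart_orbit t0, dart_orbit (prod.swap t0)}"
    by (intro card_mono) auto
  also have "\<dots> \<le> 2" by (simp add: card_insert_if)
  finally show ?thesis .
qed simp

lemma funpow_rotate_commute:
  assumes "\<And>t. t \<in> darts \<Longrightarrow> F t \<in> darts" "\<And>t. t \<in> darts \<Longrightarrow> F (rotate t) = rotate (F t)"
    and "t \<in> darts"
  shows "F ((rotate ^^ i) t) = (rotate ^^ i) (F t)"
  using assms by (induct i) (auto simp: funpow_rotate_in_darts)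

lemma image_dart_orbit:
  assumes "\<And>t. t \<in> darts \<Longrightarrow> F t \<in> darts" "\<And>t. t \<in> darts \<Longrightarrow> F (rotate t) = rotate (F t)"
    and "t \<in> darts"
  shows "F ` dart_orbit t = dart_orbit (F t)"
  unfolding dart_orbit_def using funpow_rotate_commute[of F, OF assms] by (auto simp: image_iff)

lemma commute_if_in_dart_orbit:
  assumes F1: "\<And>t. t \<in> darts \<Longrightarrow> F1 t \<in> darts" "\<And>t. t \<in> darts \<Longrightarrow> F1 (rotate t) = rotate (F1 t)"
    and F2: "\<And>t. t \<in> darts \<Longrightarrow> F2 t \<in> darts" "\<And>t. t \<in> darts \<Longrightarrow> F2 (rotate t) = rotate (F2 t)"
    and t: "t \<in> darts" and orbit: "F1 t \<in> dart_orbit t" "F2 t \<in> dart_orbit t"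
  shows "F1 (F2 t) = F2 (F1 t)"
proof -
  obtain a b where a: "F1 t = (rotate ^^ a) t" and b: "F2 t = (rotate ^^ b) t"
    using orbit unfolding dart_orbit_def by auto
  have "F1 (F2 t) = (rotate ^^ b) ((rotate ^^ a) t)"
    using a b funpow_rotate_commute[of F1, OF F1 t] by simp
  also have "\<dots> = (rotate ^^ (b + a)) t" by (simp add: funpow_add)
  also have "\<dots> = (rotate ^^ a) ((rotate ^^ b) t)" by (simp add: funpow_add add.commute)
  also have "\<dots> = F2 (F1 t)" using a b funpow_rotate_commute[of F2, OF F2 t] by simp
  finally show ?thesis .
qed

lemma automorphism_commutes_rotate:
  assumes f_X: "f ` X \<subseteq> X" and inj: "inj_on f X"
    and f_adj: "\<And>P Q. P \<in> X \<Longrightarrow> Q \<in> X \<Longrightarrow> adj (f P) (f Q) \<longleftrightarrow> adj P Q"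
    and t: "t \<in> darts"
  shows "map_prod f f t \<in> darts" "map_prod f f (rotate t) = rotate (map_prod f f t)"
proof -
  obtain P Q where t_eq: "t = (P, Q)" and adj: "adj P Q" using t by (auto simp: darts_def)
  have PQ: "P \<in> X" "Q \<in> X" using adj adj_in_X by auto
  show "map_prod f f t \<in> darts" using f_adj PQ adj t_eq by (simp add: darts_def)
  have "next_vertex (f P) (f Q) = f (next_vertex P Q)"
  proof (cases "\<exists>R. adj Q R \<and> R \<noteq> P")
    case True
    then obtain R where R: "adj Q R" "R \<noteq> P" by blast
    have "R \<in> X" using R adj_in_X by blast
    then have "next_vertex (f P) (f Q) = f R"
      using next_vertex_eq[of "f P" "f Q" "f R"] f_adj PQ adj R inj by (auto simp: inj_on_def)
    then show ?thesis using next_vertex_eq[OF adj R] by simp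
  next
    case False
    have onto: "f ` X = X" using endo_inj_surj[OF finite_X f_X inj] .
    have "\<not> (\<exists>R. adj (f Q) R \<and> R \<noteq> f P)"
    proof
      assume "\<exists>R. adj (f Q) R \<and> R \<noteq> f P"
      then obtain R where R: "adj (f Q) R" "R \<noteq> f P" by blast
      then obtain R' where "R' \<in> X" "R = f R'" using onto adj_in_X by blast
      then show False using False f_adj PQ R by auto
    qed
    then show ?thesis using next_vertex_no_other[OF False] next_vertex_no_other by metis
  qed
  then show "map_prod f f (rotate t) = rotate (map_prod f f t)" using t_eq by (simp add: rotate_def)
qed

end

locale dart_action = valency_le_2_graph X adj + group H
  for X :: "'b set" and adj and H :: "('g, 'c) monoid_scheme" +
  fixes act :: "'g \<Rightarrow> 'b \<times> 'b \<Rightarrow> 'b \<times> 'b"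
  assumes act_mult: "\<And>a b t. a \<in> carrier H \<Longrightarrow> b \<in> carrier H \<Longrightarrow> t \<in> darts \<Longrightarrow>
      act (a \<otimes>\<^bsub>H\<^esub> b) t = act a (act b t)"
    and act_one: "\<And>t. t \<in> darts \<Longrightarrow> act \<one>\<^bsub>H\<^esub> t = t"
    and act_closed: "\<And>g t. g \<in> carrier H \<Longrightarrow> t \<in> darts \<Longrightarrow> act g t \<in> darts"
    and act_rotate: "\<And>g t. g \<in> carrier H \<Longrightarrow> t \<in> darts \<Longrightarrow> act g (rotate t) = rotate (act g t)"
begin

lemma act_image_dart_orbit:
  "g \<in> carrier H \<Longrightarrow> t \<in> darts \<Longrightarrow> act g ` dart_orbit t = dart_orbit (act g t)"
  by (rule image_dart_orbit) (use act_closed act_rotate in auto)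

text \<open>\<open>H\<close> permutes the at most two dart orbits, and permutations of a 2-set commute.\<close>

lemma derived_preserves_dart_orbits:
  "derived H (carrier H) \<subseteq> {g \<in> carrier H. \<forall>p\<in>dart_orbit ` darts. act g ` p = p}"
proof (rule derived_fixes_if_commute[where act = "\<lambda>g p. act g ` p"])
  define orbits where "orbits = dart_orbit ` darts"
  have orbit_darts: "p \<subseteq> darts" if "p \<in> orbits" for p
    using that dart_orbit_subset unfolding orbits_def by blast
  show mult: "act (a \<otimes>\<^bsub>H\<^esub> b) ` p = act a ` act b ` p"
    if "a \<in> carrier H" "b \<in> carrier H" "p \<in> dart_orbit ` darts" for a b p
  proof -
    have "p \<subseteq> darts" using that(3) orbit_darts orbits_def by blast
    then show ?thesis unfolding image_image using act_mult that by (intro image_cong) auto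
  qed
  show one: "act \<one>\<^bsub>H\<^esub> ` p = p" if "p \<in> dart_orbit ` darts" for p
  proof -
    have "act \<one>\<^bsub>H\<^esub> ` p = id ` p" using act_one orbit_darts that orbits_def by (intro image_cong) auto
    then show ?thesis by simp
  qed
  have closed: "act g ` p \<in> orbits" if "g \<in> carrier H" "p \<in> orbits" for g p
    using that act_image_dart_orbit act_closed unfolding orbits_def by auto
  then show "act (inv\<^bsub>H\<^esub> k) ` p \<in> dart_orbit ` darts"
    if "k \<in> carrier H" "p \<in> dart_orbit ` darts" for k p
    using that orbits_def by simp
  have inj: "inj_on (\<lambda>p. act g ` p) orbits" if g: "g \<in> carrier H" for g
  proof (rule inj_onI)
    fix p q assume "p \<in> orbits" "q \<in> orbits" and eq: "act g ` p = act g ` q"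
    have "act (inv\<^bsub>H\<^esub> g) ` act g ` r = r" if "r \<in> orbits" for r
      using mult[OF inv_closed[OF g] g] one g that unfolding orbits_def by simp
    then show "p = q" using eq \<open>p \<in> orbits\<close> \<open>q \<in> orbits\<close> by metis
  qed
  have "finite orbits" "card orbits \<le> 2"
    using finite_darts card_dart_orbits_le_2 unfolding orbits_def by auto
  then show "act a ` act b ` p = act b ` act a ` p"
    if "a \<in> carrier H" "b \<in> carrier H" "p \<in> dart_orbit ` darts" for a b p
    by (rule injective_selfmaps_of_card_le_2_commute[where Y = orbits])
      (use that closed inj orbits_def in auto)
qed simp

text \<open>Elements preserving every dart orbit act on it as powers of \<open>rotate\<close>, so they
  commute.\<close>

lemma second_derived_fixes_darts:
  "(derived H ^^ 2) (carrier H) \<subseteq> {g \<in> carrier H. \<forall>t\<in>darts. act g t = t}"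
proof -
  define K where "K = {g \<in> carrier H. \<forall>p\<in>dart_orbit ` darts. act g ` p = p}"
  have in_orbit: "act g t \<in> dart_orbit t" if "g \<in> K" "t \<in> darts" for g t
  proof -
    have "act g ` dart_orbit t = dart_orbit t" using that unfolding K_def by auto
    then show ?thesis using dart_orbit_self by blast
  qed
  have "derived H K \<subseteq> {g \<in> carrier H. \<forall>t\<in>darts. act g t = t}"
  proof (rule derived_fixes_if_commute)
    fix a b t assume ab: "a \<in> K" "b \<in> K" and t: "t \<in> darts"
    then have "a \<in> carrier H" "b \<in> carrier H" by (auto simp: K_def)
    then show "act a (act b t) = act b (act a t)"
      by (intro commute_if_in_dart_orbit[of "act a" "act b"] in_orbit ab t)
        (auto intro: act_closed act_rotate)
  qed (use act_mult act_one act_closed K_def in auto)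
  moreover have "(derived H ^^ 2) (carrier H) = derived H (derived H (carrier H))"
    by (simp add: numeral_2_eq_2)
  moreover have "derived H (derived H (carrier H)) \<subseteq> derived H K"
    using mono_derived[OF derived_preserves_dart_orbits] K_def by simp
  ultimately show ?thesis by blast
qed

end

section \<open>Permutation groups\<close>

locale permutation_group =
  fixes V :: "'a set" and G :: "('a \<Rightarrow> 'a) set"
  assumes subgroup_BijGroup: "subgroup G (BijGroup V)"
begin

abbreviation grp :: "('a \<Rightarrow> 'a) monoid" where
  "grp \<equiv> perm_grp V G"

lemma group_grp: "group grp"
  using group.subgroup_imp_group[OF group_BijGroup subgroup_BijGroup] .

lemma mem_Bij: "g \<in> G \<Longrightarrow> g \<in> Bij V"
  using subgroup.subset[OF subgroup_BijGroup] by (auto simp: BijGroup_def)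

lemma bij_betw_perm: "g \<in> G \<Longrightarrow> bij_betw g V V"
  using mem_Bij by (simp add: Bij_def)

lemma perm_in_V: "g \<in> G \<Longrightarrow> x \<in> V \<Longrightarrow> g x \<in> V"
  using bij_betw_perm bij_betwE by blast

lemma inj_on_perm: "g \<in> G \<Longrightarrow> inj_on g V"
  using bij_betw_perm by (simp add: bij_betw_def)

lemma mult_closed: "g \<in> G \<Longrightarrow> h \<in> G \<Longrightarrow> g \<otimes>\<^bsub>grp\<^esub> h \<in> G"
  using monoid.m_closed[OF group.is_monoid[OF group_grp]] by simp

lemma one_closed: "\<one>\<^bsub>grp\<^esub> \<in> G"
  using monoid.one_closed[OF group.is_monoid[OF group_grp]] by simp

lemma inv_closed: "g \<in> G \<Longrightarrow> inv\<^bsub>grp\<^esub> g \<in> G"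
  using group.inv_closed[OF group_grp] by simp

lemma one_eq: "\<one>\<^bsub>grp\<^esub> = (\<lambda>x\<in>V. x)"
  by (simp add: BijGroup_def)

lemma mult_apply: "g \<in> G \<Longrightarrow> h \<in> G \<Longrightarrow> x \<in> V \<Longrightarrow> (g \<otimes>\<^bsub>grp\<^esub> h) x = g (h x)"
  using mem_Bij by (simp add: BijGroup_def compose_def)

lemma one_apply: "x \<in> V \<Longrightarrow> \<one>\<^bsub>grp\<^esub> x = x"
  by (simp add: one_eq)

lemma inv_eq: "g \<in> G \<Longrightarrow> inv\<^bsub>grp\<^esub> g = (\<lambda>x\<in>V. inv_into V g x)"
  using group.m_inv_consistent[OF group_BijGroup subgroup_BijGroup] inv_BijGroup mem_Bij by metis

lemma inv_apply_apply: "g \<in> G \<Longrightarrow> x \<in> V \<Longrightarrow> (inv\<^bsub>grp\<^esub> g) (g x) = x"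
  using inv_eq bij_betw_perm perm_in_V by (simp add: bij_betw_def inv_into_f_f)

lemma apply_inv_apply: "g \<in> G \<Longrightarrow> x \<in> V \<Longrightarrow> g ((inv\<^bsub>grp\<^esub> g) x) = x"
  using inv_eq bij_betw_perm by (simp add: bij_betw_def f_inv_into_f)

lemma inv_fixes: "g \<in> G \<Longrightarrow> x \<in> V \<Longrightarrow> g x = x \<Longrightarrow> (inv\<^bsub>grp\<^esub> g) x = x"
  by (metis inv_apply_apply)

lemma eq_one_if_fixes_V:
  assumes "g \<in> G" "\<And>x. x \<in> V \<Longrightarrow> g x = x"
  shows "g = \<one>\<^bsub>grp\<^esub>"
proof
  fix x show "g x = \<one>\<^bsub>grp\<^esub> x"
    using assms mem_Bij[OF assms(1)] by (cases "x \<in> V") (auto simp: one_eq Bij_def extensional_def)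
qed

lemma image_mult:
  assumes "g \<in> G" "h \<in> G" "P \<subseteq> V"
  shows "(g \<otimes>\<^bsub>grp\<^esub> h) ` P = g ` h ` P"
proof -
  have "(g \<otimes>\<^bsub>grp\<^esub> h) ` P = (\<lambda>x. g (h x)) ` P"
    using mult_apply assms by (intro image_cong) auto
  then show ?thesis by (simp add: image_image)
qed

lemma image_one: "P \<subseteq> V \<Longrightarrow> \<one>\<^bsub>grp\<^esub> ` P = P"
  using one_apply by (auto simp: image_iff subset_iff)

lemma image_inv_image: "g \<in> G \<Longrightarrow> P \<subseteq> V \<Longrightarrow> (inv\<^bsub>grp\<^esub> g) ` g ` P = P"
  using image_mult[of "inv\<^bsub>grp\<^esub> g" g P] inv_closed group.l_inv[OF group_grp, of g] image_one by simp

definition fixer :: "'a set \<Rightarrow> ('a \<Rightarrow> 'a) set" where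
  "fixer S = {g \<in> carrier grp. \<forall>y\<in>S. g y = y}"

lemma fixer_V: "fixer V \<subseteq> {\<one>\<^bsub>grp\<^esub>}"
  using eq_one_if_fixes_V by (auto simp: fixer_def)

end

section \<open>Tetravalent half-arc-transitive graphs\<close>

locale half_arc_transitive_graph = permutation_group V G
  for V :: "'a set" and G +
  fixes E :: "'a \<Rightarrow> 'a \<Rightarrow> bool"
  assumes simple: "simple_graph V E"
    and connected: "graph_connected V E"
    and tetravalent: "tetravalent V E"
    and automorphisms: "G \<subseteq> graph_aut V E"
    and half_arc: "half_arc_transitive V E G"
begin

lemma finite_V: "finite V" using simple by (simp add: simple_graph_def)
lemma E_in_V: "E u w \<Longrightarrow> u \<in> V \<and> w \<in> V" using simple by (simp add: simple_graph_def)
lemma E_sym: "E u w \<Longrightarrow> E w u" using simple by (simp add: simple_graph_def)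
lemma E_irrefl: "E u w \<Longrightarrow> u \<noteq> w" using simple by (simp add: simple_graph_def)
lemma V_nonempty: "V \<noteq> {}" using connected by (simp add: graph_connected_def)
lemma reachable: "u \<in> V \<Longrightarrow> w \<in> V \<Longrightarrow> E\<^sup>*\<^sup>* u w" using connected by (simp add: graph_connected_def)

lemma vertex_transitive: "u \<in> V \<Longrightarrow> v \<in> V \<Longrightarrow> \<exists>g\<in>G. g u = v"
  using half_arc by (simp add: half_arc_transitive_def)

lemma edge_transitive: "e \<in> graph_edges E \<Longrightarrow> f \<in> graph_edges E \<Longrightarrow> \<exists>g\<in>G. g ` e = f"
  using half_arc by (simp add: half_arc_transitive_def)

definition nbrs :: "'a \<Rightarrow> 'a set" where
  "nbrs v = {w \<in> V. E v w}"

lemma card_nbrs: "v \<in> V \<Longrightarrow> card (nbrs v) = 4"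
  using tetravalent by (simp add: tetravalent_def nbrs_def)

lemma finite_nbrs: "finite (nbrs v)"
  using finite_V by (simp add: nbrs_def)

lemma perm_E_iff: "g \<in> G \<Longrightarrow> u \<in> V \<Longrightarrow> w \<in> V \<Longrightarrow> E (g u) (g w) \<longleftrightarrow> E u w"
  using automorphisms by (auto simp: graph_aut_def)

lemma perm_E: "g \<in> G \<Longrightarrow> E u w \<Longrightarrow> E (g u) (g w)"
  using perm_E_iff E_in_V by blast

text \<open>The \<open>G\<close>-orbit of one arc (a0, b0) contains exactly one of the two arcs of each
  edge, since \<open>G\<close> is edge- but not arc-transitive.\<close>

definition ref_arc :: "'a \<times> 'a" where
  "ref_arc = (SOME p. E (fst p) (snd p))"

abbreviation "a0 \<equiv> fst ref_arc"
abbreviation "b0 \<equiv> snd ref_arc"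

lemma E_ref_arc: "E a0 b0"
proof -
  obtain v where v: "v \<in> V" using V_nonempty by auto
  then have "nbrs v \<noteq> {}" using card_nbrs by fastforce
  then have "\<exists>p. E (fst p) (snd p)" by (auto simp: nbrs_def)
  then show ?thesis unfolding ref_arc_def by (rule someI_ex)
qed

lemma a0_in_V: "a0 \<in> V" and b0_in_V: "b0 \<in> V"
  using E_ref_arc E_in_V by auto

definition oriented :: "'a \<Rightarrow> 'a \<Rightarrow> bool" where
  "oriented u w \<longleftrightarrow> (\<exists>g\<in>G. g a0 = u \<and> g b0 = w)"

lemma oriented_E: "oriented u w \<Longrightarrow> E u w"
  using perm_E E_ref_arc by (auto simp: oriented_def)

lemma oriented_in_V: "oriented u w \<Longrightarrow> u \<in> V \<and> w \<in> V"
  using oriented_E E_in_V by blast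

lemma oriented_perm:
  assumes g: "g \<in> G" and "oriented u w"
  shows "oriented (g u) (g w)"
proof -
  obtain h where h: "h \<in> G" "h a0 = u" "h b0 = w" using assms by (auto simp: oriented_def)
  then have "(g \<otimes>\<^bsub>grp\<^esub> h) a0 = g u" "(g \<otimes>\<^bsub>grp\<^esub> h) b0 = g w"
    using mult_apply[OF g h(1)] a0_in_V b0_in_V by auto
  then show ?thesis using mult_closed[OF g h(1)] unfolding oriented_def by blast
qed

lemma oriented_perm_iff: "g \<in> G \<Longrightarrow> u \<in> V \<Longrightarrow> w \<in> V \<Longrightarrow> oriented (g u) (g w) \<longleftrightarrow> oriented u w"
  using oriented_perm[of "inv\<^bsub>grp\<^esub> g"] oriented_perm[of g] inv_closed inv_apply_apply by metis

lemma oriented_transitive: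
  assumes "oriented u w" "oriented u' w'"
  obtains g where "g \<in> G" "g u = u'" "g w = w'"
proof -
  obtain h1 where h1: "h1 \<in> G" "h1 a0 = u" "h1 b0 = w" using assms(1) by (auto simp: oriented_def)
  obtain h2 where h2: "h2 \<in> G" "h2 a0 = u'" "h2 b0 = w'" using assms(2) by (auto simp: oriented_def)
  define g where "g = h2 \<otimes>\<^bsub>grp\<^esub> inv\<^bsub>grp\<^esub> h1"
  have "g \<in> G" using g_def mult_closed inv_closed h1 h2 by auto
  moreover have "g (h1 x) = h2 x" if "x \<in> V" for x
    using g_def mult_apply[OF h2(1) inv_closed[OF h1(1)] perm_in_V[OF h1(1) that]]
      inv_apply_apply[OF h1(1) that] by simp
  then have "g u = u'" "g w = w'" using h1 h2 a0_in_V b0_in_V by metis+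
  ultimately show thesis using that by blast
qed

lemma E_oriented: assumes "E u w" shows "oriented u w \<or> oriented w u"
proof -
  have "{a0, b0} \<in> graph_edges E" "{u, w} \<in> graph_edges E"
    using E_ref_arc assms by (auto simp: graph_edges_def)
  then obtain g where g: "g \<in> G" "g ` {a0, b0} = {u, w}"
    using edge_transitive by blast
  have "g a0 \<noteq> g b0" using E_irrefl[OF perm_E[OF g(1) E_ref_arc]] .
  then have "(g a0 = u \<and> g b0 = w) \<or> (g a0 = w \<and> g b0 = u)"
    using g(2) by (auto simp: doubleton_eq_iff)
  then show ?thesis using g(1) unfolding oriented_def by blast
qed

lemma oriented_ref_arc: "oriented a0 b0"
  using one_closed one_apply a0_in_V b0_in_V unfolding oriented_def by metis

lemma arc_transitive_if_ref_arc_reversed: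
  assumes k: "k \<in> G" "k a0 = b0" "k b0 = a0"
  shows "\<forall>a\<in>graph_arcs E. \<forall>b\<in>graph_arcs E. \<exists>g\<in>G. (g (fst a), g (snd a)) = b"
proof -
  have all: "oriented x y" if "E x y" for x y
  proof (cases "oriented x y")
    case False
    then have "oriented y x" using E_oriented that by blast
    then obtain h where h: "h \<in> G" "h a0 = y" "h b0 = x" by (auto simp: oriented_def)
    have "(h \<otimes>\<^bsub>grp\<^esub> k) a0 = x" "(h \<otimes>\<^bsub>grp\<^esub> k) b0 = y"
      using mult_apply[OF h(1) k(1)] a0_in_V b0_in_V k h by auto
    then show ?thesis using mult_closed[OF h(1) k(1)] unfolding oriented_def by blast
  qed simp
  show ?thesis
  proof (intro ballI)
    fix a b assume "a \<in> graph_arcs E" "b \<in> graph_arcs E"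
    then have "oriented (fst a) (snd a)" "oriented (fst b) (snd b)"
      using all by (auto simp: graph_arcs_def)
    then obtain g where "g \<in> G" "g (fst a) = fst b" "g (snd a) = snd b"
      using oriented_transitive by blast
    then show "\<exists>g\<in>G. (g (fst a), g (snd a)) = b" by (intro bexI[of _ g]) auto
  qed
qed

lemma oriented_asym:
  assumes "oriented u w"
  shows "\<not> oriented w u"
proof
  assume "oriented w u"
  obtain h where h: "h \<in> G" "h a0 = u" "h b0 = w" using assms by (auto simp: oriented_def)
  then have "oriented b0 a0" using \<open>oriented w u\<close> oriented_perm_iff a0_in_V b0_in_V by metis
  with oriented_ref_arc obtain k where "k \<in> G" "k a0 = b0" "k b0 = a0" by (rule oriented_transitive)
  then show False
    using arc_transitive_if_ref_arc_reversed half_arc by (simp add: half_arc_transitive_def)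
qed

definition out_nbrs :: "'a \<Rightarrow> 'a set" where
  "out_nbrs v = {w. oriented v w}"

definition in_nbrs :: "'a \<Rightarrow> 'a set" where
  "in_nbrs v = {w. oriented w v}"

lemma nbrs_out_in: "nbrs v = out_nbrs v \<union> in_nbrs v"
  unfolding nbrs_def out_nbrs_def in_nbrs_def
  using oriented_E E_oriented oriented_in_V by (blast intro: E_sym)

lemma out_in_disjoint: "out_nbrs v \<inter> in_nbrs v = {}"
  using oriented_asym by (auto simp: out_nbrs_def in_nbrs_def)

lemma out_nbrs_subset: "out_nbrs v \<subseteq> V" and in_nbrs_subset: "in_nbrs v \<subseteq> V"
  using oriented_in_V by (auto simp: out_nbrs_def in_nbrs_def)

lemma finite_out_nbrs: "finite (out_nbrs v)" and finite_in_nbrs: "finite (in_nbrs v)"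
  using finite_subset[OF out_nbrs_subset finite_V] finite_subset[OF in_nbrs_subset finite_V] .

lemma image_out_nbrs:
  assumes g: "g \<in> G" and v: "v \<in> V"
  shows "g ` out_nbrs v = out_nbrs (g v)"
proof
  show "g ` out_nbrs v \<subseteq> out_nbrs (g v)" using oriented_perm g by (auto simp: out_nbrs_def)
  show "out_nbrs (g v) \<subseteq> g ` out_nbrs v"
  proof
    fix w assume "w \<in> out_nbrs (g v)"
    then have "oriented (g v) (g ((inv\<^bsub>grp\<^esub> g) w))" and w: "w \<in> V"
      using apply_inv_apply[OF g] oriented_in_V by (auto simp: out_nbrs_def)
    then have "oriented v ((inv\<^bsub>grp\<^esub> g) w)"
      using oriented_perm_iff g v perm_in_V inv_closed by blast
    then show "w \<in> g ` out_nbrs v"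
      using apply_inv_apply[OF g w] by (metis out_nbrs_def image_eqI mem_Collect_eq)
  qed
qed

lemma image_in_nbrs:
  assumes g: "g \<in> G" and v: "v \<in> V"
  shows "g ` in_nbrs v = in_nbrs (g v)"
proof
  show "g ` in_nbrs v \<subseteq> in_nbrs (g v)" using oriented_perm g by (auto simp: in_nbrs_def)
  show "in_nbrs (g v) \<subseteq> g ` in_nbrs v"
  proof
    fix w assume "w \<in> in_nbrs (g v)"
    then have "oriented (g ((inv\<^bsub>grp\<^esub> g) w)) (g v)" and w: "w \<in> V"
      using apply_inv_apply[OF g] oriented_in_V by (auto simp: in_nbrs_def)
    then have "oriented ((inv\<^bsub>grp\<^esub> g) w) v"
      using oriented_perm_iff g v perm_in_V inv_closed by blast
    then show "w \<in> g ` in_nbrs v"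
      using apply_inv_apply[OF g w] by (metis in_nbrs_def image_eqI mem_Collect_eq)
  qed
qed

lemma card_out_in_nbrs_a0:
  assumes v: "v \<in> V"
  shows "card (out_nbrs v) = card (out_nbrs a0)" "card (in_nbrs v) = card (in_nbrs a0)"
proof -
  obtain g where g: "g \<in> G" "g a0 = v" using vertex_transitive a0_in_V v by blast
  then have inj: "inj_on g V" using inj_on_perm by blast
  show "card (out_nbrs v) = card (out_nbrs a0)"
    using image_out_nbrs[OF g(1) a0_in_V] g(2) card_image inj_on_subset[OF inj out_nbrs_subset]
      by metis
  show "card (in_nbrs v) = card (in_nbrs a0)"
    using image_in_nbrs[OF g(1) a0_in_V] g(2) card_image inj_on_subset[OF inj in_nbrs_subset]
      by metis
qed

text \<open>Counting the oriented arcs by their tails and by their heads gives equal out- and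
  in-valency, which therefore are both 2.\<close>

lemma card_out_in_nbrs:
  assumes v: "v \<in> V"
  shows "card (out_nbrs v) = 2" "card (in_nbrs v) = 2"
proof -
  define arcs where "arcs = {(u, w). oriented u w}"
  have "arcs = Sigma V out_nbrs" using oriented_in_V by (auto simp: arcs_def out_nbrs_def)
  then have "card arcs = card V * card (out_nbrs a0)"
    using card_SigmaI finite_V finite_out_nbrs card_out_in_nbrs_a0 by simp
  moreover have "prod.swap ` arcs = Sigma V in_nbrs"
    using oriented_in_V by (auto simp: arcs_def in_nbrs_def image_iff)
  then have "card (prod.swap ` arcs) = card V * card (in_nbrs a0)"
    using card_SigmaI finite_V finite_in_nbrs card_out_in_nbrs_a0 by simp
  moreover have "card (prod.swap ` arcs) = card arcs" by (simp add: card_image)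
  ultimately have "card (out_nbrs a0) = card (in_nbrs a0)" using finite_V V_nonempty by simp
  moreover have "card (out_nbrs a0) + card (in_nbrs a0) = 4"
    using card_nbrs[OF a0_in_V] nbrs_out_in
      card_Un_disjoint[OF finite_out_nbrs finite_in_nbrs out_in_disjoint] by simp
  ultimately show "card (out_nbrs v) = 2" "card (in_nbrs v) = 2"
    using card_out_in_nbrs_a0[OF v] by auto
qed

text \<open>An element fixing \<open>x\<close> permutes the two out- and the two in-neighbours of \<open>x\<close>, and
  permutations of a 2-set commute.\<close>

lemma fixers_commute_on_nbr:
  assumes a: "a \<in> G" and b: "b \<in> G" and x: "x \<in> V" and "a x = x" "b x = x" and "E x y"
  shows "a (b y) = b (a y)"
proof -
  have "y \<in> out_nbrs x \<or> y \<in> in_nbrs x" using \<open>E x y\<close> nbrs_out_in E_in_V by (auto simp: nbrs_def)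
  then show ?thesis
  proof
    assume "y \<in> out_nbrs x"
    moreover have "a ` out_nbrs x = out_nbrs x" "b ` out_nbrs x = out_nbrs x"
      using image_out_nbrs a b x \<open>a x = x\<close> \<open>b x = x\<close> by metis+
    ultimately show ?thesis
      by (intro injective_selfmaps_of_card_le_2_commute[OF finite_out_nbrs])
        (use card_out_in_nbrs[OF x] inj_on_subset[OF inj_on_perm[OF a] out_nbrs_subset]
          inj_on_subset[OF inj_on_perm[OF b] out_nbrs_subset] in auto)
  next
    assume "y \<in> in_nbrs x"
    moreover have "a ` in_nbrs x = in_nbrs x" "b ` in_nbrs x = in_nbrs x"
      using image_in_nbrs a b x \<open>a x = x\<close> \<open>b x = x\<close> by metis+
    ultimately show ?thesis
      by (intro injective_selfmaps_of_card_le_2_commute[OF finite_in_nbrs])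
        (use card_out_in_nbrs[OF x] inj_on_subset[OF inj_on_perm[OF a] in_nbrs_subset]
          inj_on_subset[OF inj_on_perm[OF b] in_nbrs_subset] in auto)
  qed
qed

lemma derived_fixer_subset:
  assumes H: "H \<subseteq> fixer S" and S: "S \<subseteq> V"
  shows "derived grp H \<subseteq> fixer (S \<union> {w. \<exists>x\<in>S. E x w})"
proof -
  define S' where "S' = S \<union> {w. \<exists>x\<in>S. E x w}"
  have S'_V: "S' \<subseteq> V" using S E_in_V S'_def by auto
  have H_G: "H \<subseteq> G" and H_S: "\<And>h y. h \<in> H \<Longrightarrow> y \<in> S \<Longrightarrow> h y = y"
    using H by (auto simp: fixer_def)
  have inv_S': "(inv\<^bsub>grp\<^esub> h) y \<in> S'" if h: "h \<in> H" and y: "y \<in> S'" for h y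
  proof (cases "y \<in> S")
    case True
    then have "(inv\<^bsub>grp\<^esub> h) y = y" using inv_fixes H_G H_S h S by blast
    then show ?thesis using True S'_def by simp
  next
    case False
    then obtain x where x: "x \<in> S" "E x y" using y S'_def by auto
    have "E ((inv\<^bsub>grp\<^esub> h) x) ((inv\<^bsub>grp\<^esub> h) y)" using perm_E inv_closed H_G h x by blast
    moreover have "(inv\<^bsub>grp\<^esub> h) x = x" using inv_fixes H_G H_S h x S by blast
    ultimately show ?thesis using x S'_def by auto
  qed
  have comm: "a (b y) = b (a y)" if "a \<in> H" "b \<in> H" "y \<in> S'" for a b y
  proof (cases "y \<in> S")
    case False
    then obtain x where "x \<in> S" "E x y" using \<open>y \<in> S'\<close> S'_def by auto
    then show ?thesis using fixers_commute_on_nbr H_G H_S that S by blast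
  qed (use H_S[OF that(1)] H_S[OF that(2)] in simp)
  have "derived grp H \<subseteq> {g \<in> carrier grp. \<forall>y\<in>S'. g y = y}"
    by (rule group.derived_fixes_if_commute[OF group_grp])
      (use H_G S'_V mult_apply one_apply inv_S' comm in auto)
  then show ?thesis by (simp add: fixer_def S'_def)
qed

fun ball :: "nat \<Rightarrow> 'a set" where
  "ball 0 = {a0}"
| "ball (Suc k) = ball k \<union> {w. \<exists>x\<in>ball k. E x w}"

lemma ball_subset_V: "ball k \<subseteq> V"
  by (induct k) (auto simp: a0_in_V dest: E_in_V)

lemma V_subset_ball: "\<exists>k. V \<subseteq> ball k"
proof -
  have ball_mono: "k \<le> k' \<Longrightarrow> ball k \<subseteq> ball k'" for k k'
    by (rule lift_Suc_mono_le[of ball]) auto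
  have in_ball: "\<exists>k. v \<in> ball k" if "v \<in> V" for v
    using reachable[OF a0_in_V that]
  proof (induct rule: rtranclp_induct)
    case (step y z)
    then obtain k where "y \<in> ball k" by auto
    then have "z \<in> ball (Suc k)" using step by auto
    then show ?case by blast
  qed (auto intro: exI[of _ 0])
  have "F \<subseteq> V \<Longrightarrow> \<exists>k. F \<subseteq> ball k" if "finite F" for F
    using that
  proof (induct F rule: finite_induct)
    case (insert x F)
    then obtain k k' where "F \<subseteq> ball k" "x \<in> ball k'" using in_ball by blast
    then have "insert x F \<subseteq> ball (max k k')"
      using ball_mono[of k "max k k'"] ball_mono[of k' "max k k'"]
      by auto
    then show ?case by blast
  qed simp
  then show ?thesis using finite_V by blast
qed

lemma vertex_stabiliser_derived_trivial: "\<exists>k. (derived grp ^^ k) (fixer {a0}) \<subseteq> {\<one>\<^bsub>grp\<^esub>}"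
proof -
  have "(derived grp ^^ k) (fixer {a0}) \<subseteq> fixer (ball k)" for k
    by (induct k) (use derived_fixer_subset ball_subset_V in auto)
  moreover obtain k where "V \<subseteq> ball k" using V_subset_ball by blast
  then have "fixer (ball k) \<subseteq> fixer V" by (auto simp: fixer_def)
  ultimately show ?thesis using fixer_V by blast
qed

end

section \<open>Normal quotients\<close>

locale normal_quotient = half_arc_transitive_graph V G E for V G E +
  fixes N :: "('a \<Rightarrow> 'a) set"
  assumes normal_N: "N \<lhd> perm_grp V G"
begin

abbreviation block :: "'a \<Rightarrow> 'a set" where
  "block \<equiv> orbit_of N"

abbreviation blocks :: "'a set set" where
  "blocks \<equiv> quotient_vertices V N"

lemma subgroup_N: "subgroup N grp" using normal_N by (simp add: normal_def)
lemma N_subset_G: "N \<subseteq> G" using subgroup.subset[OF subgroup_N] by simp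
lemma mem_N_G: "n \<in> N \<Longrightarrow> n \<in> G" using N_subset_G by auto
lemma N_inv_closed: "n \<in> N \<Longrightarrow> inv\<^bsub>grp\<^esub> n \<in> N" using subgroup.m_inv_closed[OF subgroup_N] by simp
lemma N_mult_closed: "n \<in> N \<Longrightarrow> m \<in> N \<Longrightarrow> n \<otimes>\<^bsub>grp\<^esub> m \<in> N"
  using subgroup.m_closed[OF subgroup_N] by simp
lemma N_conj_closed: "g \<in> G \<Longrightarrow> n \<in> N \<Longrightarrow> g \<otimes>\<^bsub>grp\<^esub> n \<otimes>\<^bsub>grp\<^esub> inv\<^bsub>grp\<^esub> g \<in> N"
  using normal.inv_op_closed2[OF normal_N] by simp

lemma mem_block_iff: "y \<in> block x \<longleftrightarrow> (\<exists>n\<in>N. y = n x)"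
  unfolding orbit_of_def by auto

lemma block_self: "x \<in> V \<Longrightarrow> x \<in> block x"
  using subgroup.one_closed[OF subgroup_N] one_apply mem_block_iff by metis

lemma block_subset_V: "x \<in> V \<Longrightarrow> block x \<subseteq> V"
  using mem_N_G perm_in_V mem_block_iff by auto

lemma blocks_eq: "blocks = block ` V"
  by (simp add: quotient_vertices_def)

lemma finite_blocks: "finite blocks"
  using finite_V blocks_eq by simp

lemma block_perm_N:
  assumes n: "n \<in> N" and x: "x \<in> V"
  shows "block (n x) = block x"
proof
  show "block (n x) \<subseteq> block x"
  proof
    fix y assume "y \<in> block (n x)"
    then obtain m where m: "m \<in> N" "y = m (n x)" by (auto simp: mem_block_iff)
    then have "y = (m \<otimes>\<^bsub>grp\<^esub> n) x" using mult_apply n x mem_N_G by auto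
    then show "y \<in> block x" using N_mult_closed m n by (auto simp: mem_block_iff)
  qed
  show "block x \<subseteq> block (n x)"
  proof
    fix y assume "y \<in> block x"
    then obtain m where m: "m \<in> N" "y = m x" by (auto simp: mem_block_iff)
    have "(m \<otimes>\<^bsub>grp\<^esub> inv\<^bsub>grp\<^esub> n) (n x) = m ((inv\<^bsub>grp\<^esub> n) (n x))"
      using mult_apply[of m "inv\<^bsub>grp\<^esub> n" "n x"] m n x inv_closed perm_in_V mem_N_G by simp
    then have "y = (m \<otimes>\<^bsub>grp\<^esub> inv\<^bsub>grp\<^esub> n) (n x)" using m n x inv_apply_apply mem_N_G by simp
    then show "y \<in> block (n x)" using N_mult_closed N_inv_closed m n by (auto simp: mem_block_iff)
  qed
qed

lemma block_eq: "x \<in> V \<Longrightarrow> y \<in> block x \<Longrightarrow> block y = block x"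
  using block_perm_N by (auto simp: mem_block_iff)

lemma block_eq_iff: "x \<in> V \<Longrightarrow> y \<in> V \<Longrightarrow> block x = block y \<longleftrightarrow> y \<in> block x"
  using block_eq block_self by metis

lemma image_block:
  assumes g: "g \<in> G" and x: "x \<in> V"
  shows "g ` block x = block (g x)"
proof
  show "g ` block x \<subseteq> block (g x)"
  proof
    fix y assume "y \<in> g ` block x"
    then obtain n where n: "n \<in> N" "y = g (n x)" by (auto simp: mem_block_iff)
    have "(g \<otimes>\<^bsub>grp\<^esub> n \<otimes>\<^bsub>grp\<^esub> inv\<^bsub>grp\<^esub> g) (g x) = (g \<otimes>\<^bsub>grp\<^esub> n) ((inv\<^bsub>grp\<^esub> g) (g x))"
      using mult_apply[of "g \<otimes>\<^bsub>grp\<^esub> n" "inv\<^bsub>grp\<^esub> g" "g x"] g x n mult_closed inv_closed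
        perm_in_V mem_N_G by simp
    also have "\<dots> = g (n x)" using inv_apply_apply mult_apply g x n mem_N_G by simp
    finally show "y \<in> block (g x)" using N_conj_closed[OF g n(1)] n by (metis mem_block_iff)
  qed
  show "block (g x) \<subseteq> g ` block x"
  proof
    fix y assume "y \<in> block (g x)"
    then obtain n where n: "n \<in> N" "y = n (g x)" by (auto simp: mem_block_iff)
    define m where "m = inv\<^bsub>grp\<^esub> g \<otimes>\<^bsub>grp\<^esub> n \<otimes>\<^bsub>grp\<^esub> inv\<^bsub>grp\<^esub> (inv\<^bsub>grp\<^esub> g)"
    have m: "m \<in> N" using N_conj_closed[OF inv_closed[OF g] n(1)] m_def by simp
    have "inv\<^bsub>grp\<^esub> (inv\<^bsub>grp\<^esub> g) = g" using group.inv_inv[OF group_grp] g by simp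
    then have "m x = (inv\<^bsub>grp\<^esub> g \<otimes>\<^bsub>grp\<^esub> n) (g x)"
      unfolding m_def using mult_apply[of "inv\<^bsub>grp\<^esub> g \<otimes>\<^bsub>grp\<^esub> n" g x] g x n mult_closed inv_closed
        mem_N_G by simp
    also have "\<dots> = (inv\<^bsub>grp\<^esub> g) (n (g x))"
      using mult_apply[of "inv\<^bsub>grp\<^esub> g" n "g x"] g x n inv_closed perm_in_V mem_N_G by simp
    finally have "g (m x) = y" using apply_inv_apply g n perm_in_V mem_N_G x by auto
    then show "y \<in> g ` block x" using m by (metis mem_block_iff imageI)
  qed
qed

lemma block_perm_eq: "g \<in> G \<Longrightarrow> x \<in> V \<Longrightarrow> y \<in> V \<Longrightarrow> block x = block y \<Longrightarrow> block (g x) = block (g y)"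
  using image_block by metis

lemma quotient_nbrs:
  assumes v: "v \<in> V"
  shows "{C \<in> blocks. quotient_adj E (block v) C} = block ` nbrs v - {block v}"
proof
  show "{C \<in> blocks. quotient_adj E (block v) C} \<subseteq> block ` nbrs v - {block v}"
  proof
    fix C assume C: "C \<in> {C \<in> blocks. quotient_adj E (block v) C}"
    then obtain z where z: "z \<in> V" "C = block z" using blocks_eq by auto
    from C obtain u w where "block v \<noteq> C" "u \<in> block v" "w \<in> C" "E u w"
      by (auto simp: quotient_adj_def)
    then obtain n where n: "n \<in> N" "u = n v" using mem_block_iff by auto
    have w: "w \<in> V" using \<open>E u w\<close> E_in_V by auto
    have "E (n v) (n ((inv\<^bsub>grp\<^esub> n) w))" using \<open>E u w\<close> n apply_inv_apply[OF mem_N_G[OF n(1)] w] by simp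
    moreover have "(inv\<^bsub>grp\<^esub> n) w \<in> V" using perm_in_V inv_closed mem_N_G n(1) w by blast
    ultimately have "(inv\<^bsub>grp\<^esub> n) w \<in> nbrs v"
      using perm_E_iff[OF mem_N_G[OF n(1)] v] by (simp add: nbrs_def)
    moreover have "block ((inv\<^bsub>grp\<^esub> n) w) = block w"
      using block_perm_N[OF N_inv_closed[OF n(1)] w] .
    moreover have "block w = C" using block_eq z \<open>w \<in> C\<close> by blast
    ultimately show "C \<in> block ` nbrs v - {block v}" using \<open>block v \<noteq> C\<close> by blast
  qed
  show "block ` nbrs v - {block v} \<subseteq> {C \<in> blocks. quotient_adj E (block v) C}"
  proof
    fix C assume "C \<in> block ` nbrs v - {block v}"
    then obtain w where w: "w \<in> nbrs v" "C = block w" "block w \<noteq> block v" by auto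
    then have "v \<in> block v" "w \<in> block w" using block_self v by (auto simp: nbrs_def)
    then show "C \<in> {C \<in> blocks. quotient_adj E (block v) C}"
      using w blocks_eq by (auto simp: quotient_adj_def nbrs_def)
  qed
qed

definition separates_nbhds :: bool where
  "separates_nbhds \<longleftrightarrow> (\<forall>v\<in>V. inj_on block (insert v (nbrs v)))"

lemma semiregular_if_separates_nbhds:
  assumes separates_nbhds
  shows "semiregular V N"
  unfolding semiregular_def
proof (intro ballI impI)
  fix v n assume v: "v \<in> V" and n: "n \<in> N" and "n v = v"
  have fixes_nbr: "n w = w" if "x \<in> V" "n x = x" "E x w" for x w
  proof -
    have "n w \<in> nbrs x" "w \<in> nbrs x"
      using perm_E[OF mem_N_G[OF n] \<open>E x w\<close>] \<open>E x w\<close> \<open>n x = x\<close> E_in_V by (auto simp: nbrs_def)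
    moreover have "block (n w) = block w" using block_perm_N n E_in_V \<open>E x w\<close> by blast
    ultimately show "n w = w" using assms that unfolding separates_nbhds_def inj_on_def by blast
  qed
  have "n x = x" if "x \<in> V" for x
    using reachable[OF v that]
    by (induct rule: rtranclp_induct) (use \<open>n v = v\<close> fixes_nbr E_in_V in blast)+
  then have "n = \<one>\<^bsub>grp\<^esub>" using eq_one_if_fixes_V mem_N_G n by blast
  then show "n = (\<lambda>x\<in>V. x)" by (simp add: one_eq)
qed

lemma normal_cover_if_separates_nbhds:
  assumes separates_nbhds
  shows "normal_cover_tetra V E N"
  unfolding normal_cover_tetra_def
proof
  fix P assume "P \<in> blocks"
  then obtain v where v: "v \<in> V" "P = block v" using blocks_eq by auto
  have inj: "inj_on block (insert v (nbrs v))" using assms v unfolding separates_nbhds_def by auto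
  have "block v \<notin> block ` nbrs v"
  proof
    assume "block v \<in> block ` nbrs v"
    then obtain w where w: "w \<in> nbrs v" "block v = block w" by auto
    then have "w \<noteq> v" using E_irrefl by (auto simp: nbrs_def)
    then show False using inj w unfolding inj_on_def by blast
  qed
  then have "{C \<in> blocks. quotient_adj E P C} = block ` nbrs v" using quotient_nbrs v by auto
  also have "card \<dots> = card (nbrs v)" using inj by (intro card_image) (auto intro: inj_on_subset)
  finally show "card {C \<in> blocks. quotient_adj E P C} = 4" using card_nbrs v by simp
qed

lemma quotient_nbrs_empty_if_edge_in_block:
  assumes "E v w" "block w = block v" and u: "u \<in> V"
  shows "block ` nbrs u - {block u} = {}"
proof -
  have v: "v \<in> V" "w \<in> V" using assms E_in_V by auto
  have "block w' = block u'" if "E u' w'" for u' w'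
  proof -
    have "{v, w} \<in> graph_edges E" "{u', w'} \<in> graph_edges E"
      using \<open>E v w\<close> that by (auto simp: graph_edges_def)
    then obtain g where g: "g \<in> G" "g ` {v, w} = {u', w'}" using edge_transitive by blast
    then have "block (g w) = block (g v)" using block_perm_eq v assms(2) by blast
    moreover have "{g v, g w} = {u', w'}" using g(2) by simp
    ultimately show ?thesis by (auto simp: doubleton_eq_iff)
  qed
  then show ?thesis by (auto simp: nbrs_def)
qed

text \<open>If the successors of every vertex in an \<open>N\<close>-invariant relation lie in one block, then
  mapping a block to the block of its successors is a surjection of the finite set of blocks,
  hence injective: the predecessors of every vertex lie in one block as well.\<close>

lemma same_block_of_preds:
  assumes R_V: "\<And>u w. R u w \<Longrightarrow> u \<in> V \<and> w \<in> V"
    and R_N: "\<And>n u w. n \<in> N \<Longrightarrow> R u w \<Longrightarrow> R (n u) (n w)"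
    and has_pred: "\<And>u. u \<in> V \<Longrightarrow> \<exists>c. R c u"
    and succs: "\<And>u w1 w2. R u w1 \<Longrightarrow> R u w2 \<Longrightarrow> block w1 = block w2"
    and "R c1 u" "R c2 u"
  shows "block c1 = block c2"
proof -
  define succ_block where "succ_block P = block (SOME w. \<exists>u\<in>P. R u w)" for P
  have succ_block: "succ_block (block u) = block w" if "R u w" for u w
  proof -
    have uw: "u \<in> V" "w \<in> V" using R_V that by auto
    define w' where "w' = (SOME w. \<exists>u'\<in>block u. R u' w)"
    have "\<exists>w. \<exists>u'\<in>block u. R u' w" using that block_self uw by blast
    then have "\<exists>u'\<in>block u. R u' w'" unfolding w'_def by (rule someI_ex)
    then obtain u' where u': "u' \<in> block u" "R u' w'" by blast
    obtain n where n: "n \<in> N" "u' = n u" using u' mem_block_iff by auto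
    have w': "w' \<in> V" using R_V u'(2) by blast
    have "R ((inv\<^bsub>grp\<^esub> n) u') ((inv\<^bsub>grp\<^esub> n) w')"
      using R_N[OF N_inv_closed[OF n(1)] u'(2)] .
    moreover have "(inv\<^bsub>grp\<^esub> n) u' = u" using n inv_apply_apply[OF mem_N_G[OF n(1)] uw(1)] by simp
    ultimately have "block ((inv\<^bsub>grp\<^esub> n) w') = block w" using succs[OF _ that] by metis
    moreover have "block ((inv\<^bsub>grp\<^esub> n) w') = block w'" using block_perm_N N_inv_closed n w' by simp
    ultimately show ?thesis unfolding succ_block_def w'_def[symmetric] by simp
  qed
  have "blocks \<subseteq> succ_block ` blocks"
  proof
    fix P assume "P \<in> blocks"
    then obtain u where u: "u \<in> V" "P = block u" using blocks_eq by auto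
    obtain c where c: "R c u" using has_pred u by auto
    then have "block c \<in> blocks" using R_V blocks_eq by auto
    then show "P \<in> succ_block ` blocks" using succ_block[OF c] u by auto
  qed
  then have "inj_on succ_block blocks" using finite_surj_inj[OF finite_blocks] by auto
  moreover have "block c1 \<in> blocks" "block c2 \<in> blocks"
    using R_V \<open>R c1 u\<close> \<open>R c2 u\<close> blocks_eq by auto
  moreover have "succ_block (block c1) = succ_block (block c2)"
    using succ_block[OF \<open>R c1 u\<close>] succ_block[OF \<open>R c2 u\<close>] by simp
  ultimately show ?thesis by (auto dest: inj_onD)
qed

lemma same_block_of_in_nbrs:
  assumes "\<And>u w1 w2. oriented u w1 \<Longrightarrow> oriented u w2 \<Longrightarrow> block w1 = block w2"
    and "oriented c1 u" "oriented c2 u"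
  shows "block c1 = block c2"
proof (rule same_block_of_preds[where R = oriented])
  show "\<exists>c. oriented c u" if "u \<in> V" for u
  proof -
    have "in_nbrs u \<noteq> {}" using card_out_in_nbrs(2)[OF that] by auto
    then show ?thesis by (auto simp: in_nbrs_def)
  qed
qed (use assms oriented_in_V oriented_perm mem_N_G in blast)+

lemma same_block_of_out_nbrs:
  assumes "\<And>u w1 w2. oriented w1 u \<Longrightarrow> oriented w2 u \<Longrightarrow> block w1 = block w2"
    and "oriented u c1" "oriented u c2"
  shows "block c1 = block c2"
proof (rule same_block_of_preds[where R = "\<lambda>x y. oriented y x"])
  show "\<exists>c. oriented u c" if "u \<in> V" for u
  proof -
    have "out_nbrs u \<noteq> {}" using card_out_in_nbrs(1)[OF that] by auto
    then show ?thesis by (auto simp: out_nbrs_def)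
  qed
qed (use assms oriented_in_V oriented_perm mem_N_G in blast)+

lemma quotient_valency_le_2_if_out_nbrs_in_block:
  assumes out: "\<And>u w1 w2. oriented u w1 \<Longrightarrow> oriented u w2 \<Longrightarrow> block w1 = block w2"
    and u: "u \<in> V"
  shows "card (block ` nbrs u - {block u}) \<le> 2"
proof -
  have "card (block ` out_nbrs u) \<le> Suc 0"
    unfolding card_le_Suc0_iff_eq[OF finite_imageI[OF finite_out_nbrs]]
    unfolding out_nbrs_def using out by blast
  moreover have "card (block ` in_nbrs u) \<le> Suc 0"
    unfolding card_le_Suc0_iff_eq[OF finite_imageI[OF finite_in_nbrs]]
    unfolding in_nbrs_def using same_block_of_in_nbrs out by blast
  ultimately have "card (block ` nbrs u) \<le> 2"
    using nbrs_out_in card_Un_le[of "block ` out_nbrs u" "block ` in_nbrs u"]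
      by (simp add: image_Un)
  then show ?thesis using card_Diff1_le[of "block ` nbrs u" "block u"] finite_nbrs by simp
qed

lemma same_block_everywhere:
  assumes S_perm: "\<And>g a. g \<in> G \<Longrightarrow> a \<in> V \<Longrightarrow> g ` S a = S (g a)" and S_V: "\<And>a. S a \<subseteq> V"
    and card_S: "\<And>a. a \<in> V \<Longrightarrow> card (S a) = 2"
    and v: "v \<in> V" and xy: "x \<in> S v" "y \<in> S v" "x \<noteq> y" "block x = block y"
    and a: "a \<in> V" and w: "w1 \<in> S a" "w2 \<in> S a"
  shows "block w1 = block w2"
proof -
  have "z = x \<or> z = y" if "z \<in> S v" for z
    using card_le_2_eq_or_eq[of "S v"] card_S[OF v] xy that
      by (metis card.infinite order_refl zero_neq_numeral)
  then have same_v: "block z1 = block z2" if "z1 \<in> S v" "z2 \<in> S v" for z1 z2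
    using xy(4) that by metis
  obtain g where g: "g \<in> G" "g v = a" using vertex_transitive v a by blast
  then obtain z1 z2 where z: "z1 \<in> S v" "z2 \<in> S v" "w1 = g z1" "w2 = g z2"
    using S_perm[OF g(1) v] w by (metis imageE)
  then show ?thesis using block_perm_eq[OF g(1)] same_v S_V by (metis subsetD)
qed

lemma quotient_valency_le_2_if_out_in_block:
  assumes p: "p \<in> out_nbrs v" and q: "q \<in> in_nbrs v" and pq: "block p = block q"
    and v: "v \<in> V" and u: "u \<in> V"
  shows "card (block ` nbrs u - {block u}) \<le> 2"
proof -
  have "p \<in> V" "q \<in> V" using p q out_nbrs_subset in_nbrs_subset by blast+
  then obtain n where n: "n \<in> N" "p = n q" using pq block_eq_iff mem_block_iff by metis
  have "oriented q v" "oriented v p" using p q by (auto simp: in_nbrs_def out_nbrs_def)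
  then have p_nv: "oriented p (n v)" using oriented_perm mem_N_G n by blast
  have block_nv: "block (n v) = block v" using block_perm_N n v by simp
  have "block c \<in> block ` out_nbrs a" if ca: "oriented c a" for c a
  proof -
    obtain g where g: "g \<in> G" "g v = c" "g p = a" using oriented_transitive[OF \<open>oriented v p\<close> ca] .
    have "oriented a (g (n v))" using oriented_perm[OF g(1) p_nv] g by simp
    moreover have "block (g (n v)) = block c"
      using block_perm_eq[OF g(1) _ v block_nv] g n v perm_in_V mem_N_G by simp
    ultimately show ?thesis by (auto simp: out_nbrs_def)
  qed
  then have "block ` nbrs u \<subseteq> block ` out_nbrs u" using nbrs_out_in by (auto simp: in_nbrs_def)
  then have "card (block ` nbrs u) \<le> card (out_nbrs u)"
    using finite_out_nbrs card_image_le card_mono order_trans by (metis finite_imageI)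
  then show ?thesis
    using card_out_in_nbrs[OF u] card_Diff1_le[of "block ` nbrs u" "block u"] finite_nbrs by simp
qed

lemma quotient_valency_le_2:
  assumes "\<not> separates_nbhds" and u: "u \<in> V"
  shows "card (block ` nbrs u - {block u}) \<le> 2"
proof -
  obtain v x y where v: "v \<in> V" and xy: "x \<in> insert v (nbrs v)" "y \<in> insert v (nbrs v)"
    "x \<noteq> y" "block x = block y"
    using assms unfolding separates_nbhds_def inj_on_def by blast
  consider "x = v \<or> y = v" | "x \<in> out_nbrs v" "y \<in> out_nbrs v" | "x \<in> in_nbrs v" "y \<in> in_nbrs v"
    | "x \<in> out_nbrs v" "y \<in> in_nbrs v" | "x \<in> in_nbrs v" "y \<in> out_nbrs v"
    using xy nbrs_out_in by blast
  then show ?thesis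
  proof cases
    case 1
    then obtain w where "E v w" "block w = block v" using xy by (auto simp: nbrs_def)
    then have "block ` nbrs u - {block u} = {}"
      using quotient_nbrs_empty_if_edge_in_block u by blast
    then show ?thesis by (metis card.empty le0)
  next
    case 2
    have "block w1 = block w2" if "oriented a w1" "oriented a w2" for a w1 w2
    proof (rule same_block_everywhere[where S = out_nbrs and v = v and x = x and y = y])
      show "a \<in> V" "w1 \<in> out_nbrs a" "w2 \<in> out_nbrs a"
        using that oriented_in_V by (auto simp: out_nbrs_def)
    qed (use 2 xy v image_out_nbrs out_nbrs_subset card_out_in_nbrs in auto)
    then show ?thesis using quotient_valency_le_2_if_out_nbrs_in_block u by blast
  next
    case 3
    have in_same: "block w1 = block w2" if "oriented w1 a" "oriented w2 a" for a w1 w2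
    proof (rule same_block_everywhere[where S = in_nbrs and v = v and x = x and y = y])
      show "a \<in> V" "w1 \<in> in_nbrs a" "w2 \<in> in_nbrs a"
        using that oriented_in_V by (auto simp: in_nbrs_def)
    qed (use 3 xy v image_in_nbrs in_nbrs_subset card_out_in_nbrs in auto)
    have "block w1 = block w2" if "oriented a w1" "oriented a w2" for a w1 w2
      using in_same that by (rule same_block_of_out_nbrs)
    then show ?thesis using quotient_valency_le_2_if_out_nbrs_in_block u by blast
  next
    case 4
    then show ?thesis using quotient_valency_le_2_if_out_in_block xy(4) v u by blast
  next
    case 5
    then show ?thesis using quotient_valency_le_2_if_out_in_block xy(4) v u by metis
  qed
qed

definition quotient_edge :: "'a set \<Rightarrow> 'a set \<Rightarrow> bool" where
  "quotient_edge P Q \<longleftrightarrow> P \<in> blocks \<and> Q \<in> blocks \<and> quotient_adj E P Q"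

lemma quotient_edge_if_E:
  assumes "E u w"
  shows "block u = block w \<or> quotient_edge (block u) (block w)"
proof -
  have "u \<in> V" "w \<in> V" using assms E_in_V by auto
  then show ?thesis
    using assms block_self blocks_eq unfolding quotient_edge_def quotient_adj_def by blast
qed

lemma valency_le_2_graph_quotient:
  assumes "\<not> separates_nbhds"
  shows "valency_le_2_graph blocks quotient_edge"
proof
  show "finite blocks" by (rule finite_blocks)
  show "quotient_edge P Q \<Longrightarrow> P \<in> blocks \<and> Q \<in> blocks" for P Q by (simp add: quotient_edge_def)
  show "quotient_edge P Q \<Longrightarrow> quotient_edge Q P" for P Q
    unfolding quotient_edge_def quotient_adj_def using E_sym by blast
  show "card {Q. quotient_edge P Q} \<le> 2" if P: "P \<in> blocks" for P
  proof -
    obtain v where v: "v \<in> V" "P = block v" using P blocks_eq by auto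
    have "{Q. quotient_edge P Q} = {C \<in> blocks. quotient_adj E (block v) C}"
      using P v by (auto simp: quotient_edge_def)
    also have "\<dots> = block ` nbrs v - {block v}" using quotient_nbrs[OF v(1)] .
    finally show ?thesis using quotient_valency_le_2[OF assms v(1)] by simp
  qed
  show "quotient_edge\<^sup>*\<^sup>* P Q" if PQ: "P \<in> blocks" "Q \<in> blocks" for P Q
  proof -
    obtain u w where u: "u \<in> V" "P = block u" and w: "w \<in> V" "Q = block w"
      using PQ blocks_eq by auto
    have "quotient_edge\<^sup>*\<^sup>* (block u) (block w)"
      using reachable[OF u(1) w(1)]
    proof (induct rule: rtranclp_induct)
      case (step y z)
      then show ?case using quotient_edge_if_E[OF step(2)] by (metis rtranclp.rtrancl_into_rtrancl)
    qed simp
    then show ?thesis using u w by simp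
  qed
qed

lemma blocks_subset_V: "P \<in> blocks \<Longrightarrow> P \<subseteq> V"
  using block_subset_V blocks_eq by auto

lemma image_in_blocks: "g \<in> G \<Longrightarrow> P \<in> blocks \<Longrightarrow> g ` P \<in> blocks"
  using image_block blocks_eq perm_in_V by auto

lemma inj_on_image_blocks: "g \<in> G \<Longrightarrow> inj_on ((`) g) blocks"
  unfolding inj_on_def using inj_on_image_eq_iff[OF inj_on_perm] blocks_subset_V by blast

lemma quotient_edge_image:
  assumes g: "g \<in> G" and "quotient_edge P Q"
  shows "quotient_edge (g ` P) (g ` Q)"
proof -
  have PQ: "P \<in> blocks" "Q \<in> blocks" "P \<noteq> Q"
    using assms by (auto simp: quotient_edge_def quotient_adj_def)
  then have "g ` P \<noteq> g ` Q" using inj_on_image_blocks[OF g] by (auto dest: inj_onD)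
  moreover obtain u w where "u \<in> P" "w \<in> Q" "E u w"
    using assms by (auto simp: quotient_edge_def quotient_adj_def)
  ultimately show ?thesis
    using image_in_blocks g PQ perm_E unfolding quotient_edge_def quotient_adj_def by blast
qed

lemma quotient_edge_image_iff:
  assumes "g \<in> G" "P \<in> blocks" "Q \<in> blocks"
  shows "quotient_edge (g ` P) (g ` Q) \<longleftrightarrow> quotient_edge P Q"
  using quotient_edge_image[OF assms(1)]
    quotient_edge_image[OF inv_closed[OF assms(1)], of "g ` P" "g ` Q"]
    image_inv_image assms blocks_subset_V by auto

definition image_pair :: "('a \<Rightarrow> 'a) \<Rightarrow> 'a set \<times> 'a set \<Rightarrow> 'a set \<times> 'a set" where
  "image_pair g = map_prod ((`) g) ((`) g)"

lemma dart_action_quotient: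
  assumes "\<not> separates_nbhds"
  shows "dart_action blocks quotient_edge grp image_pair"
proof -
  interpret Q: valency_le_2_graph blocks quotient_edge
    using valency_le_2_graph_quotient[OF assms] .
  have dart_V: "P \<subseteq> V" "P' \<subseteq> V" if "(P, P') \<in> Q.darts" for P P'
    using that blocks_subset_V by (auto simp: Q.darts_def quotient_edge_def)
  show ?thesis
  proof (rule dart_action.intro[OF valency_le_2_graph_quotient[OF assms] group_grp], unfold_locales)
    fix g t assume g: "g \<in> carrier grp" and t: "t \<in> Q.darts"
    have "inj_on ((`) g) blocks" "(`) g ` blocks \<subseteq> blocks"
      using g inj_on_image_blocks image_in_blocks by auto
    then show "image_pair g t \<in> Q.darts" "image_pair g (Q.rotate t) = Q.rotate (image_pair g t)"
      using Q.automorphism_commutes_rotate[of "(`) g"] quotient_edge_image_iff g t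
      unfolding image_pair_def by auto
  next
    fix a b t assume "a \<in> carrier grp" "b \<in> carrier grp" "t \<in> Q.darts"
    then show "image_pair (a \<otimes>\<^bsub>grp\<^esub> b) t = image_pair a (image_pair b t)"
      using image_mult dart_V unfolding image_pair_def by (cases t) simp
  next
    fix t assume "t \<in> Q.darts"
    then show "image_pair \<one>\<^bsub>grp\<^esub> t = t"
      using image_one dart_V unfolding image_pair_def by (cases t) simp
  qed
qed

lemma second_derived_subset_block_stabiliser:
  assumes "\<not> separates_nbhds"
  shows "(derived grp ^^ 2) G \<subseteq> {g \<in> G. g a0 \<in> block a0}"
proof -
  interpret Q: dart_action blocks quotient_edge grp image_pair
    using dart_action_quotient[OF assms] .
  have "(derived grp ^^ 2) (carrier grp) \<subseteq> {g \<in> carrier grp. \<forall>t\<in>Q.darts. image_pair g t = t}"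
    by (rule Q.second_derived_fixes_darts)
  moreover have
    "{g \<in> carrier grp. \<forall>t\<in>Q.darts. image_pair g t = t} \<subseteq> {g \<in> G. g ` block a0 = block a0}"
  proof (cases "\<exists>P. quotient_edge (block a0) P")
    case True
    then obtain P where dart: "(block a0, P) \<in> Q.darts" by (auto simp: Q.darts_def)
    have "g ` block a0 = block a0" if "\<forall>t\<in>Q.darts. image_pair g t = t" for g
      using that dart unfolding image_pair_def by fastforce
    then show ?thesis by auto
  next
    case False
    have "P = block a0" if "P \<in> blocks" for P
    proof -
      have "block a0 \<in> blocks" using a0_in_V blocks_eq by simp
      then have "quotient_edge\<^sup>*\<^sup>* (block a0) P" using Q.connected that by blast
      then show ?thesis using False by (cases rule: converse_rtranclpE) auto
    qed
    moreover have "g ` block a0 \<in> blocks" if "g \<in> G" for g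
      using image_in_blocks that a0_in_V blocks_eq by simp
    ultimately show ?thesis by auto
  qed
  moreover have "{g \<in> G. g ` block a0 = block a0} \<subseteq> {g \<in> G. g a0 \<in> block a0}"
    using block_self a0_in_V by blast
  ultimately show ?thesis by simp
qed

lemma block_stabiliser_coset_of_fixer:
  assumes x: "x \<in> G" "x a0 \<in> block a0"
  obtains l where "l \<in> fixer {a0}" "N #>\<^bsub>grp\<^esub> l = N #>\<^bsub>grp\<^esub> x"
proof -
  obtain n where n: "n \<in> N" "x a0 = n a0" using x mem_block_iff by auto
  define l where "l = inv\<^bsub>grp\<^esub> n \<otimes>\<^bsub>grp\<^esub> x"
  have "l \<in> G" using l_def x n inv_closed mult_closed mem_N_G by simp
  moreover have "l a0 = a0"
    using l_def mult_apply[OF inv_closed x(1)] n inv_apply_apply a0_in_V mem_N_G by simp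
  moreover have "l \<in> N #>\<^bsub>grp\<^esub> x" unfolding l_def r_coset_def using N_inv_closed n by blast
  then have "N #>\<^bsub>grp\<^esub> x = N #>\<^bsub>grp\<^esub> l"
    using group.repr_independence[OF group_grp _ _ subgroup_N] x by simp
  ultimately show thesis using that by (simp add: fixer_def)
qed

text \<open>The block stabiliser is \<open>N\<close> times the stabiliser of a0, so modulo \<open>N\<close> its derived
  series is the image of that of the vertex stabiliser.\<close>

lemma derived_block_stabiliser_subset_N:
  assumes "(derived grp ^^ k) (fixer {a0}) \<subseteq> {\<one>\<^bsub>grp\<^esub>}"
  shows "(derived grp ^^ k) {g \<in> G. g a0 \<in> block a0} \<subseteq> N"
proof -
  interpret N: normal N grp using normal_N .
  have group_quotient: "group (grp Mod N)" using N.factorgroup_is_group .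
  define coset where "coset = (\<lambda>a. N #>\<^bsub>grp\<^esub> a)"
  have hom: "group_hom grp (grp Mod N) coset"
    unfolding group_hom_def group_hom_axioms_def
    using group_grp group_quotient N.r_coset_hom_Mod coset_def by auto
  define H where "H = {g \<in> G. g a0 \<in> block a0}"
  have image_H: "coset ` H \<subseteq> coset ` fixer {a0}"
  proof
    fix y assume "y \<in> coset ` H"
    then obtain x where "x \<in> G" "x a0 \<in> block a0" "y = coset x" by (auto simp: H_def)
    then show "y \<in> coset ` fixer {a0}"
      using block_stabiliser_coset_of_fixer unfolding coset_def by (metis image_eqI)
  qed
  have "coset ` ((derived grp ^^ k) H) = (derived (grp Mod N) ^^ k) (coset ` H)"
    using group_hom.exp_of_derived_img[OF hom] H_def by simp
  also have "\<dots> \<subseteq> (derived (grp Mod N) ^^ k) (coset ` fixer {a0})"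
    using group.mono_exp_of_derived[OF group_quotient image_H] .
  also have "\<dots> = coset ` ((derived grp ^^ k) (fixer {a0}))"
    using group_hom.exp_of_derived_img[OF hom] by (simp add: fixer_def)
  also have "\<dots> \<subseteq> {N}"
    using assms N.subset group.coset_mult_one[OF group_grp] coset_def by auto
  finally have "coset ` ((derived grp ^^ k) H) \<subseteq> {N}" .
  moreover have "(derived grp ^^ k) H \<subseteq> carrier grp"
    using group.exp_of_derived_in_carrier[OF group_grp] H_def by auto
  ultimately show ?thesis
    unfolding H_def[symmetric] using group.rcos_self[OF group_grp _ subgroup_N] coset_def by blast
qed

lemma derived_N_trivial:
  assumes "solvable (perm_grp V N)"
  shows "\<exists>m. (derived grp ^^ m) N \<subseteq> {\<one>\<^bsub>grp\<^esub>}"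
proof -
  have group_N: "group (grp\<lparr>carrier := N\<rparr>)"
    using group.subgroup_imp_group[OF group_grp subgroup_N] .
  obtain m where m: "(derived (grp\<lparr>carrier := N\<rparr>) ^^ m) N = {\<one>\<^bsub>grp\<^esub>}"
    using group.solvable_iff_trivial_derived_seq[OF group_N] assms by auto
  have "(derived (grp\<lparr>carrier := N\<rparr>) ^^ i) N = (derived grp ^^ i) N \<and>
      (derived grp ^^ i) N \<subseteq> N" for i
  proof (induct i)
    case (Suc i)
    then show ?case
      using group.derived_consistent[OF group_grp _ subgroup_N]
        group.derived_incl[OF group_grp _ subgroup_N]
      by simp
  qed simp
  then show ?thesis using m by blast
qed

lemma separates_nbhds_if_not_solvable:
  assumes "solvable (perm_grp V N)" and "\<not> solvable grp"
  shows separates_nbhds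
proof (rule ccontr)
  assume "\<not> separates_nbhds"
  then have j: "(derived grp ^^ 2) G \<subseteq> {g \<in> G. g a0 \<in> block a0}"
    by (rule second_derived_subset_block_stabiliser)
  obtain k where "(derived grp ^^ k) (fixer {a0}) \<subseteq> {\<one>\<^bsub>grp\<^esub>}"
    using vertex_stabiliser_derived_trivial by blast
  then have k: "(derived grp ^^ k) {g \<in> G. g a0 \<in> block a0} \<subseteq> N"
    by (rule derived_block_stabiliser_subset_N)
  obtain m where m: "(derived grp ^^ m) N \<subseteq> {\<one>\<^bsub>grp\<^esub>}" using derived_N_trivial assms(1) by blast
  have "(derived grp ^^ (m + k + 2)) G =
      (derived grp ^^ m) ((derived grp ^^ k) ((derived grp ^^ 2) G))"
    by (simp only: funpow_add comp_apply)
  also have "\<dots> \<subseteq> {\<one>\<^bsub>grp\<^esub>}"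
    using group.mono_exp_of_derived[OF group_grp group.mono_exp_of_derived[OF group_grp j]]
      group.mono_exp_of_derived[OF group_grp k] m by blast
  finally have "(derived grp ^^ (m + k + 2)) (carrier grp) \<subseteq> {\<one>\<^bsub>grp\<^esub>}" by simp
  moreover have "\<one>\<^bsub>grp\<^esub> \<in> (derived grp ^^ (m + k + 2)) (carrier grp)"
    using group.exp_of_derived_is_subgroup[OF group_grp group.subgroup_self[OF group_grp]]
    by (rule subgroup.one_closed)
  ultimately have "(derived grp ^^ (m + k + 2)) (carrier grp) = {\<one>\<^bsub>grp\<^esub>}" by blast
  then show False using assms(2) group.solvable_iff_trivial_derived_seq[OF group_grp] by blast
qed

end

theorem lemma3p1:
  fixes V :: "'a set" and E :: "'a \<Rightarrow> 'a \<Rightarrow> bool"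
    and G N :: "('a \<Rightarrow> 'a) set"
  assumes "simple_graph V E"
    and "graph_connected V E"
    and "tetravalent V E"
    and "subgroup G (BijGroup V)"
    and "G \<subseteq> graph_aut V E"
    and "half_arc_transitive V E G"
    and "N \<lhd> perm_grp V G"
    and "solvable (perm_grp V N)"
    and "\<not> solvable (perm_grp V G)"
  shows "normal_cover_tetra V E N \<and> semiregular V N"
proof -
  interpret normal_quotient V G E N
    using assms(1-7) by (simp add: normal_quotient_def normal_quotient_axioms_def
      half_arc_transitive_graph_def half_arc_transitive_graph_axioms_def permutation_group_def)
  have separates_nbhds using separates_nbhds_if_not_solvable assms(8,9) by blast
  then show ?thesis using normal_cover_if_separates_nbhds semiregular_if_separates_nbhds by blast
qed

end
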